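(* Let $f\in\mathbb C[x_1,\dots,x_n]$ be nonzero and $\ell\in\mathbb N$. Then the small Gröbner fan of the ideal $\mathrm{Ann}(1/f^\ell)$ is a subdivision (refinement) of the fan $\Sigma_{f^\ell}$. Moreover, for every $\omega\in\mathbb R^n\setminus\{0\}$, the b-function $b_{\mathrm{Ann}(1/f_{\tau_\omega}^\ell),\omega}(s)$ divides $b_{\mathrm{Ann}(1/f^\ell),\omega}(s)$.
   Context: $D_n$ is the $n$-th Weyl algebra ($\partial_ix_j=x_j\partial_i+\delta_{ij}$); ideals are left ideals. For $\omega\in\mathbb R^n$, the $(-\omega,\omega)$-weight of $x^\alpha\partial^\beta$ is $-\langle\omega,\alpha\rangle+\langle\omega,\beta\rangle$; $\mathrm{in}_{(-\omega,\omega)}(P)$ is the sum of the terms of maximal weight of the normally ordered expression of $P$, and $\mathrm{in}_{(-\omega,\omega)}(I)$ is the left ideal generated by the $\mathrm{in}_{(-\omega,\omega)}(P)$, $P\in I\setminus\{0\}$. For a holonomic ideal $I$ and $\omega\neq0$, with $s=\sum_i\omega_ix_i\partial_i$, $b_{I,\omega}(s)$ is the monic generator of $\mathrm{in}_{(-\omega,\omega)}(I)\cap\mathbb C[s]$. The small Gröbner fan of $I$ is the fan $\Sigma$ in $\mathbb R^n$ such that $\mathrm{in}_{(-\omega,\omega)}(I)$ is constant for $\omega$ in the relative interior of each cone of $\Sigma$, distinct cones corresponding to distinct initial ideals. For a nonzero rational function $g$, $\mathrm{Ann}(g)=\{P\in D_n:P\bullet g=0\}$ ($x_i\bullet g=x_ig$,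 $\partial_i\bullet g=\partial g/\partial x_i$). For $f=\sum_\gamma c_\gamma x^\gamma$: $\Gamma(f)$ is the convex hull of $\mathrm{Supp}(f)=\{\gamma:c_\gamma\ne0\}$, $\mathrm{ord}_f(\omega)=\min\{\langle\gamma,\omega\rangle:\gamma\in\Gamma(f)\}$, $\tau_\omega=\{u\in\Gamma(f):\langle u,\omega\rangle=\mathrm{ord}_f(\omega)\}$, $f_\tau=\sum_{\gamma\in\tau\cap\mathrm{Supp}(f)}c_\gamma x^\gamma$; for a face $\tau$, $C_\tau=\{\omega:\langle u,\omega\rangle=\mathrm{ord}_f(\omega)\ \forall u\in\tau\}$, and $\Sigma_f$ is the fan of all $C_\tau$. $\mathbb N=\{0,1,2,\dots\}$. *)

theory Defs
  imports "HOL-Analysis.Analysis" "HOL-Library.Poly_Mapping" "HOL-Computational_Algebra.Polynomial"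
begin

type_synonym 'n mono = "'n \<Rightarrow>\<^sub>0 nat"
type_synonym 'n mpoly = "'n mono \<Rightarrow>\<^sub>0 complex"
text \<open>Weyl algebra element in normal order: coefficient of x^alpha d^beta at (alpha, beta).\<close>
type_synonym 'n weyl = "('n mono \<times> 'n mono) \<Rightarrow>\<^sub>0 complex"

definition unitv :: "'n \<Rightarrow> 'n mono" where
  "unitv i = Poly_Mapping.single i 1"

definition xmono :: "'n mono \<Rightarrow> 'n mpoly" where
  "xmono a = Poly_Mapping.single a 1"

definition cmul :: "complex \<Rightarrow> 'n mpoly \<Rightarrow> 'n mpoly" where
  "cmul c p = Poly_Mapping.map (\<lambda>z. c * z) p"

definition pderiv_mp :: "'n \<Rightarrow> 'n mpoly \<Rightarrow> 'n mpoly" where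
  "pderiv_mp i p = (\<Sum>a\<in>Poly_Mapping.keys p.
      Poly_Mapping.single (a - unitv i) (Poly_Mapping.lookup p a * of_nat (Poly_Mapping.lookup (a :: 'n mono) i)))"

definition tdeg :: "'n::finite mono \<Rightarrow> nat" where
  "tdeg b = (\<Sum>i\<in>UNIV. Poly_Mapping.lookup b i)"

text \<open>(x^a d^b)(x^c d^d) = sum_k prod_i k_i! C(b_i,k_i) C(c_i,k_i) x^(a+c-k) d^(b+d-k)\<close>
definition weyl_mono_mult :: "'n::finite mono \<Rightarrow> 'n mono \<Rightarrow> 'n mono \<Rightarrow> 'n mono \<Rightarrow> 'n weyl" where
  "weyl_mono_mult a b c d =
     (\<Sum>k\<in>{k. \<forall>i. Poly_Mapping.lookup k i \<le> Poly_Mapping.lookup b i \<and> Poly_Mapping.lookup k i \<le> Poly_Mapping.lookup c i}.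
        Poly_Mapping.single (a + c - k, b + d - k)
          (of_nat (\<Prod>i\<in>UNIV. fact (Poly_Mapping.lookup k i) * (Poly_Mapping.lookup b i choose Poly_Mapping.lookup k i)
                                 * (Poly_Mapping.lookup c i choose Poly_Mapping.lookup k i))))"

definition weyl_mult :: "'n::finite weyl \<Rightarrow> 'n weyl \<Rightarrow> 'n weyl" where
  "weyl_mult P Q = (\<Sum>(a,b)\<in>Poly_Mapping.keys P. \<Sum>(c,d)\<in>Poly_Mapping.keys Q.
      Poly_Mapping.map (\<lambda>z. Poly_Mapping.lookup P (a,b) * Poly_Mapping.lookup Q (c,d) * z) (weyl_mono_mult a b c d))"

definition weyl_one :: "'n weyl" where
  "weyl_one = Poly_Mapping.single (0, 0) 1"

primrec weyl_pow :: "'n::finite weyl \<Rightarrow> nat \<Rightarrow> 'n weyl" where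
  "weyl_pow s 0 = weyl_one"
| "weyl_pow s (Suc k) = weyl_mult s (weyl_pow s k)"

inductive_set left_ideal_gen :: "'n::finite weyl set \<Rightarrow> 'n weyl set" for S where
  zero: "0 \<in> left_ideal_gen S"
| gen: "g \<in> S \<Longrightarrow> g \<in> left_ideal_gen S"
| add: "a \<in> left_ideal_gen S \<Longrightarrow> b \<in> left_ideal_gen S \<Longrightarrow> a + b \<in> left_ideal_gen S"
| lmult: "a \<in> left_ideal_gen S \<Longrightarrow> weyl_mult Q a \<in> left_ideal_gen S"

definition vec_of :: "'n::finite mono \<Rightarrow> real^'n" where
  "vec_of a = (\<chi> i. real (Poly_Mapping.lookup a i))"

definition wt :: "real^'n \<Rightarrow> ('n::finite mono \<times> 'n mono) \<Rightarrow> real" where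
  "wt w ab = (\<Sum>i\<in>UNIV. w $ i * (real (Poly_Mapping.lookup (snd ab) i) - real (Poly_Mapping.lookup (fst ab) i)))"

definition init_form :: "real^'n \<Rightarrow> 'n::finite weyl \<Rightarrow> 'n weyl" where
  "init_form w P = (let m = Max (wt w ` Poly_Mapping.keys P) in
      (\<Sum>k\<in>{k\<in>Poly_Mapping.keys P. wt w k = m}. Poly_Mapping.single k (Poly_Mapping.lookup P k)))"

definition init_ideal :: "real^'n \<Rightarrow> 'n::finite weyl set \<Rightarrow> 'n weyl set" where
  "init_ideal w I = left_ideal_gen {init_form w P | P. P \<in> I \<and> P \<noteq> 0}"

definition euler_s :: "real^'n \<Rightarrow> 'n::finite weyl" where
  "euler_s w = (\<Sum>i\<in>UNIV. Poly_Mapping.single (unitv i, unitv i) (complex_of_real (w $ i)))"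

definition poly_at_s :: "real^'n \<Rightarrow> complex poly \<Rightarrow> 'n::finite weyl" where
  "poly_at_s w p = (\<Sum>k\<le>degree p.
      weyl_mult (Poly_Mapping.single (0,0) (coeff p k)) (weyl_pow (euler_s w) k))"

definition bfun :: "'n::finite weyl set \<Rightarrow> real^'n \<Rightarrow> complex poly" where
  "bfun I w = (THE b. {p. poly_at_s w p \<in> init_ideal w I} = {p. b dvd p}
                      \<and> (b = 0 \<or> lead_coeff b = 1))"

text \<open>d_i (h / q^m) = (d_i h * q - m h d_i q) / q^(m+1); pairs (h,m) stand for h/q^m\<close>
definition dstep :: "'n mpoly \<Rightarrow> 'n \<Rightarrow> 'n mpoly \<times> nat \<Rightarrow> 'n mpoly \<times> nat" where
  "dstep q i hm = (pderiv_mp i (fst hm) * q - of_nat (snd hm) * fst hm * pderiv_mp i q,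
                   Suc (snd hm))"

definition var_list :: "'n::finite list" where
  "var_list = (SOME xs. set xs = UNIV \<and> distinct xs)"

text \<open>d^b (1/q^l) as a pair (h, l + |b|)\<close>
definition dpow_inv :: "'n::finite mpoly \<Rightarrow> nat \<Rightarrow> 'n mono \<Rightarrow> 'n mpoly \<times> nat" where
  "dpow_inv q l b = foldr (\<lambda>i. dstep q i ^^ Poly_Mapping.lookup b i) var_list (1, l)"

text \<open>P \<bullet> (1/q^l) = 0, cleared of denominators (q \<noteq> 0 and C[x] is a domain)\<close>
definition annihilates :: "'n::finite weyl \<Rightarrow> 'n mpoly \<Rightarrow> nat \<Rightarrow> bool" where
  "annihilates P q l = (let N = (\<Sum>(a,b)\<in>Poly_Mapping.keys P. snd (dpow_inv q l b)) in
     (\<Sum>(a,b)\<in>Poly_Mapping.keys P. cmul (Poly_Mapping.lookup P (a,b))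
         (xmono a * fst (dpow_inv q l b) * q ^ (N - snd (dpow_inv q l b)))) = 0)"

definition Ann_inv_pow :: "'n::finite mpoly \<Rightarrow> nat \<Rightarrow> 'n weyl set" where
  "Ann_inv_pow q l = {P. annihilates P q l}"

definition newton :: "'n::finite mpoly \<Rightarrow> (real^'n) set" where
  "newton f = convex hull (vec_of ` Poly_Mapping.keys f)"

definition ord_f :: "'n::finite mpoly \<Rightarrow> real^'n \<Rightarrow> real" where
  "ord_f f w = Inf ((\<lambda>u. inner u w) ` newton f)"

definition tau :: "'n::finite mpoly \<Rightarrow> real^'n \<Rightarrow> (real^'n) set" where
  "tau f w = {u \<in> newton f. inner u w = ord_f f w}"

definition face_part :: "'n::finite mpoly \<Rightarrow> (real^'n) set \<Rightarrow> 'n mpoly" where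
  "face_part f t = (\<Sum>a\<in>{a\<in>Poly_Mapping.keys f. vec_of a \<in> t}. Poly_Mapping.single a (Poly_Mapping.lookup f a))"

definition normal_cone :: "'n::finite mpoly \<Rightarrow> (real^'n) set \<Rightarrow> (real^'n) set" where
  "normal_cone f t = {w. \<forall>u\<in>t. inner u w = ord_f f w}"

definition newton_fan :: "'n::finite mpoly \<Rightarrow> (real^'n) set set" where
  "newton_fan f = {normal_cone f t | t. t face_of newton f \<and> t \<noteq> {}}"

definition is_fan :: "(real^'n::finite) set set \<Rightarrow> bool" where
  "is_fan F \<longleftrightarrow> finite F \<and> {} \<notin> F \<and> (\<forall>C\<in>F. polyhedron C \<and> cone C)
     \<and> (\<forall>C\<in>F. \<forall>D. D face_of C \<and> D \<noteq> {} \<longrightarrow> D \<in> F)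
     \<and> (\<forall>C\<in>F. \<forall>D\<in>F. (C \<inter> D) face_of C \<and> (C \<inter> D) face_of D)"

definition is_small_groebner_fan :: "'n::finite weyl set \<Rightarrow> (real^'n) set set \<Rightarrow> bool" where
  "is_small_groebner_fan I F \<longleftrightarrow> is_fan F \<and> \<Union>F = UNIV
     \<and> (\<forall>C\<in>F. \<forall>w\<in>rel_interior C. \<forall>w'\<in>rel_interior C. init_ideal w I = init_ideal w' I)
     \<and> (\<forall>C\<in>F. \<forall>D\<in>F. C \<noteq> D \<longrightarrow>
          (\<forall>w\<in>rel_interior C. \<forall>w'\<in>rel_interior D. init_ideal w I \<noteq> init_ideal w' I))"

definition refines :: "(real^'n::finite) set set \<Rightarrow> (real^'n) set set \<Rightarrow> bool" where
  "refines F G \<longleftrightarrow> \<Union>F = \<Union>G \<and> (\<forall>C\<in>F. \<exists>D\<in>G. C \<subseteq> D)"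

end

theory Submission
  imports Defs "HOL-Computational_Algebra.Fraction_Field"
begin

text \<open>Put \<open>\<theta>\<^sub>w = \<Sum>\<^sub>i w\<^sub>i x\<^sub>i \<partial>\<^sub>i\<close>. Taking \<open>(-w,w)\<close>-initial parts in the identity
  \<open>P \<bullet> f\<^sup>-\<^sup>l = 0\<close>, after clearing denominators, shows that \<open>in\<^sub>w(P)\<close> annihilates \<open>in\<^sub>w(f)\<^sup>-\<^sup>l\<close>,
  where \<open>in\<^sub>w(f) = f\<^sub>\<tau>\<close> for \<open>\<tau> = \<tau>\<^sub>w\<close>. As \<open>in\<^sub>w(P)\<close> is its own initial form, this gives
  \<open>in\<^sub>w Ann(f\<^sup>-\<^sup>l) \<subseteq> in\<^sub>w Ann(in\<^sub>w(f)\<^sup>-\<^sup>l)\<close>, and the b-function of the larger ideal divides that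
  of the smaller one.

  For the fan let \<open>g = f\<^sup>l\<close>, so that \<open>Ann(f\<^sup>-\<^sup>l) = Ann(g\<^sup>-\<^sup>1)\<close>. The operator \<open>g \<theta>\<^sub>w + \<theta>\<^sub>w(g)\<close>
  annihilates \<open>g\<^sup>-\<^sup>1\<close> and has initial form \<open>in\<^sub>w(g) \<theta>\<^sub>w + \<theta>\<^sub>w(in\<^sub>w(g))\<close>. If \<open>w\<close> and \<open>w'\<close>
  have the same initial ideal, the operator for \<open>w'\<close> therefore annihilates \<open>in\<^sub>w(g)\<^sup>-\<^sup>1\<close>,
  which forces \<open>in\<^sub>w(g)\<close> to be \<open>w'\<close>-homogeneous of minimal \<open>w'\<close>-weight; by symmetry
  \<open>\<tau>\<^sub>w = \<tau>\<^sub>w\<^sub>'\<close>. So \<open>\<tau>\<close> is constant on the relative interior of each cone of the small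
  Groebner fan, and since normal cones are closed, the whole cone lies in a cone of \<open>\<Sigma>\<^bsub>f\<^sup>l\<^esub>\<close>.\<close>

section \<open>Weighted homogeneous parts of polynomials\<close>

lemma poly_mapping_sum_single:
  "(p::'a \<Rightarrow>\<^sub>0 'b::comm_monoid_add) = (\<Sum>a\<in>Poly_Mapping.keys p. Poly_Mapping.single a (Poly_Mapping.lookup p a))"
  by (rule poly_mapping_eqI) (simp add: lookup_sum lookup_single when_def in_keys_iff split: if_splits)

lemma single_sum: "(\<Sum>x\<in>S. Poly_Mapping.single a (g x)) = Poly_Mapping.single a (\<Sum>x\<in>S. g x)"
  by (induction S rule: infinite_finite_induct) (simp_all add: single_add)

lemma prod_single_one: "(\<Prod>i\<in>S. Poly_Mapping.single (g i) (1::complex)) = Poly_Mapping.single (\<Sum>i\<in>S. g i) 1"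
  by (induction S rule: infinite_finite_induct) (simp_all add: mult_single)

lemma power_single_unitv: "Poly_Mapping.single (unitv i) (1::complex) ^ n = Poly_Mapping.single (Poly_Mapping.single i n) 1"
proof (induction n)
  case (Suc n)
  have "unitv i + Poly_Mapping.single i n = Poly_Mapping.single i (Suc n)"
    by (simp add: unitv_def single_add[symmetric])
  then show ?case
    using Suc by (simp add: mult_single)
qed simp

lemma mpoly_mult_sum_single:
  "(p::'n::finite mpoly) * q =
     (\<Sum>a\<in>Poly_Mapping.keys p. \<Sum>b\<in>Poly_Mapping.keys q. Poly_Mapping.single (a + b) (Poly_Mapping.lookup p a * Poly_Mapping.lookup q b))"
  by (subst (1 2) poly_mapping_sum_single) (simp add: sum_product mult_single)

lemma lookup_cmul [simp]: "Poly_Mapping.lookup (cmul c p) k = c * Poly_Mapping.lookup p k"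
  by (simp add: cmul_def Poly_Mapping.map.rep_eq when_def)

lemma cmul_zero [simp]: "cmul c 0 = 0"
  by (rule poly_mapping_eqI) simp

lemma cmul_conv_mult: "cmul c p = Poly_Mapping.single 0 c * p"
  unfolding cmul_def by (rule mult_map_scale_conv_mult)

lemma lookup_unitv: "Poly_Mapping.lookup (unitv i) j = (if i = j then 1 else 0)"
  by (simp add: unitv_def lookup_single when_def)

lemma minus_unitv_add_unitv: "Poly_Mapping.lookup a i \<noteq> 0 \<Longrightarrow> a - unitv i + unitv i = a"
  by (rule poly_mapping_eqI) (auto simp: lookup_add lookup_minus lookup_unitv)

definition mweight :: "real^'n \<Rightarrow> 'n::finite mono \<Rightarrow> real" where
  "mweight w a = inner (vec_of a) w"

lemma mweight_conv_sum: "mweight w a = (\<Sum>i\<in>UNIV. real (Poly_Mapping.lookup a i) * w $ i)"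
  by (simp add: mweight_def vec_of_def inner_vec_def)

lemma mweight_add: "mweight w (a + b) = mweight w a + mweight w b"
  by (simp add: mweight_conv_sum lookup_add sum.distrib distrib_right)

lemma mweight_zero [simp]: "mweight w 0 = 0"
  by (simp add: mweight_conv_sum)

lemma mweight_unitv: "mweight w (unitv i) = w $ i"
proof -
  have "mweight w (unitv i) = (\<Sum>j\<in>UNIV. if i = j then w $ j else 0)"
    unfolding mweight_conv_sum by (rule sum.cong) (auto simp: lookup_unitv)
  then show ?thesis by simp
qed

lemma mweight_minus_unitv: "Poly_Mapping.lookup a i \<noteq> 0 \<Longrightarrow> mweight w (a - unitv i) = mweight w a - w $ i"
  using mweight_add[of w "a - unitv i" "unitv i"] by (simp add: minus_unitv_add_unitv mweight_unitv)

lemma wt_conv_mweight: "wt w (a, b) = mweight w b - mweight w a"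
  by (simp add: wt_def mweight_conv_sum right_diff_distrib sum_subtractf mult.commute)

definition hom_part :: "real^'n \<Rightarrow> real \<Rightarrow> 'n::finite mpoly \<Rightarrow> 'n mpoly" where
  "hom_part w d p = (\<Sum>a\<in>{a\<in>Poly_Mapping.keys p. mweight w a = d}. Poly_Mapping.single a (Poly_Mapping.lookup p a))"

lemma lookup_hom_part: "Poly_Mapping.lookup (hom_part w d p) a = (if mweight w a = d then Poly_Mapping.lookup p a else 0)"
  by (simp add: hom_part_def lookup_sum lookup_single when_def in_keys_iff split: if_splits)

lemma hom_part_conv_sum:
  "hom_part w d p = (\<Sum>a\<in>Poly_Mapping.keys p. if mweight w a = d then Poly_Mapping.single a (Poly_Mapping.lookup p a) else 0)"
  unfolding hom_part_def by (simp add: sum.inter_filter)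

lemma hom_part_zero [simp]: "hom_part w d 0 = 0"
  by (simp add: hom_part_def)

lemma hom_part_diff: "hom_part w d (p - q) = hom_part w d p - hom_part w d q"
  by (rule poly_mapping_eqI) (simp add: lookup_hom_part lookup_minus)

lemma hom_part_sum: "hom_part w d (sum g S) = (\<Sum>x\<in>S. hom_part w d (g x))"
  by (rule poly_mapping_eqI) (simp add: lookup_hom_part lookup_sum)

lemma hom_part_cmul: "hom_part w d (cmul c p) = cmul c (hom_part w d p)"
  by (rule poly_mapping_eqI) (simp add: lookup_hom_part)

lemma hom_part_single:
  "hom_part w d (Poly_Mapping.single a c) = (if mweight w a = d then Poly_Mapping.single a c else 0)"
  by (rule poly_mapping_eqI) (simp add: lookup_hom_part lookup_single when_def)

definition weight_ge :: "real^'n \<Rightarrow> real \<Rightarrow> 'n::finite mpoly \<Rightarrow> bool" where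
  "weight_ge w d p \<longleftrightarrow> (\<forall>a\<in>Poly_Mapping.keys p. d \<le> mweight w a)"

lemma weight_ge_add: "weight_ge w d p \<Longrightarrow> weight_ge w d q \<Longrightarrow> weight_ge w d (p + q)"
  using keys_add[of p q] by (force simp: weight_ge_def)

lemma weight_ge_diff: "weight_ge w d p \<Longrightarrow> weight_ge w d q \<Longrightarrow> weight_ge w d (p - q)"
  using weight_ge_add[of w d p "- q"] by (simp add: weight_ge_def)

lemma weight_ge_sum: "(\<And>x. x \<in> S \<Longrightarrow> weight_ge w d (g x)) \<Longrightarrow> weight_ge w d (sum g S)"
  unfolding weight_ge_def by (auto dest!: keys_sum[THEN subsetD])

lemma weight_ge_single: "d \<le> mweight w a \<Longrightarrow> weight_ge w d (Poly_Mapping.single a c)"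
  by (simp add: weight_ge_def)

lemma hom_part_eq_0_below:
  assumes "weight_ge w d p" "d' < d"
  shows "hom_part w d' p = 0"
  using assms by (intro poly_mapping_eqI) (force simp: lookup_hom_part weight_ge_def in_keys_iff)

lemma weight_ge_mult: "weight_ge w d1 p \<Longrightarrow> weight_ge w d2 q \<Longrightarrow> weight_ge w (d1 + d2) (p * q)"
  using keys_mult[of p q] by (force simp: weight_ge_def mweight_add intro: add_mono)

lemma hom_part_mult:
  assumes "weight_ge w d1 p" "weight_ge w d2 q"
  shows "hom_part w (d1 + d2) (p * q) = hom_part w d1 p * hom_part w d2 q"
proof -
  have "hom_part w (d1 + d2) (p * q) = (\<Sum>a\<in>Poly_Mapping.keys p. \<Sum>b\<in>Poly_Mapping.keys q.
      if mweight w a = d1 \<and> mweight w b = d2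
      then Poly_Mapping.single (a + b) (Poly_Mapping.lookup p a * Poly_Mapping.lookup q b) else 0)"
    unfolding mpoly_mult_sum_single[of p q] hom_part_sum hom_part_single
  proof (intro sum.cong refl)
    fix a b assume "a \<in> Poly_Mapping.keys p" "b \<in> Poly_Mapping.keys q"
    then have "d1 \<le> mweight w a" "d2 \<le> mweight w b"
      using assms by (auto simp: weight_ge_def)
    then show "(if mweight w (a + b) = d1 + d2 then Poly_Mapping.single (a + b) (Poly_Mapping.lookup p a * Poly_Mapping.lookup q b) else 0) =
      (if mweight w a = d1 \<and> mweight w b = d2 then Poly_Mapping.single (a + b) (Poly_Mapping.lookup p a * Poly_Mapping.lookup q b) else 0)"
      by (auto simp: mweight_add)
  qed
  also have "\<dots> = hom_part w d1 p * hom_part w d2 q"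
    unfolding hom_part_conv_sum sum_product by (intro sum.cong refl) (simp add: mult_single)
  finally show ?thesis .
qed

lemma weight_ge_of_nat: "weight_ge w 0 (of_nat m)"
  by (metis weight_ge_single order_refl single_of_nat mweight_zero)

lemma hom_part_of_nat: "hom_part w 0 (of_nat m) = of_nat m"
  by (metis single_of_nat hom_part_single mweight_zero)

lemma weight_ge_power: "weight_ge w d p \<Longrightarrow> weight_ge w (real k * d) (p ^ k)"
proof (induction k)
  case 0
  then show ?case by (simp add: weight_ge_def)
next
  case (Suc k)
  then show ?case using weight_ge_mult[of w d p "real k * d" "p ^ k"] by (simp add: algebra_simps)
qed

lemma hom_part_power: "weight_ge w d p \<Longrightarrow> hom_part w (real k * d) (p ^ k) = hom_part w d p ^ k"
proof (induction k)
  case 0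
  then show ?case using hom_part_of_nat[of w 1] by simp
next
  case (Suc k)
  then have "hom_part w (d + real k * d) (p * p ^ k) = hom_part w d p * hom_part w (real k * d) (p ^ k)"
    by (intro hom_part_mult weight_ge_power)
  then show ?case using Suc by (simp add: algebra_simps)
qed

lemma weight_ge_xmono: "weight_ge w (mweight w a) (xmono a)"
  and hom_part_xmono: "hom_part w (mweight w a) (xmono a) = xmono a"
  by (simp_all add: xmono_def weight_ge_single hom_part_single)

section \<open>Partial derivatives of polynomials\<close>

lemma pderiv_mp_conv_sum:
  assumes "finite S" "Poly_Mapping.keys p \<subseteq> S"
  shows "pderiv_mp i p = (\<Sum>a\<in>S. Poly_Mapping.single (a - unitv i) (Poly_Mapping.lookup p a * of_nat (Poly_Mapping.lookup a i)))"
  unfolding pderiv_mp_def using assms by (intro sum.mono_neutral_left) (auto simp: in_keys_iff)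

lemma pderiv_mp_add: "pderiv_mp i (p + q) = pderiv_mp i p + pderiv_mp i q"
proof -
  let ?S = "Poly_Mapping.keys p \<union> Poly_Mapping.keys q"
  have "Poly_Mapping.keys (p + q) \<subseteq> ?S"
    by (rule keys_add)
  then show ?thesis
    by (simp add: pderiv_mp_conv_sum[of ?S] lookup_add distrib_right single_add sum.distrib)
qed

lemma pderiv_mp_zero [simp]: "pderiv_mp i 0 = 0"
  by (simp add: pderiv_mp_def)

lemma pderiv_mp_diff: "pderiv_mp i (p - q) = pderiv_mp i p - pderiv_mp i q"
  using pderiv_mp_add[of i "p - q" q] by (simp add: algebra_simps)

lemma pderiv_mp_sum: "pderiv_mp i (sum g S) = (\<Sum>x\<in>S. pderiv_mp i (g x))"
  by (induction S rule: infinite_finite_induct) (auto simp: pderiv_mp_add)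

lemma pderiv_mp_single:
  "pderiv_mp i (Poly_Mapping.single a c) = Poly_Mapping.single (a - unitv i) (c * of_nat (Poly_Mapping.lookup a i))"
  by (subst pderiv_mp_conv_sum[of "{a}"]) auto

lemma pderiv_mp_single_mult_single:
  fixes c d :: complex
  shows "pderiv_mp i (Poly_Mapping.single a c * Poly_Mapping.single b d) =
    pderiv_mp i (Poly_Mapping.single a c) * Poly_Mapping.single b d + Poly_Mapping.single a c * pderiv_mp i (Poly_Mapping.single b d)"
proof -
  have "a + b - unitv i = a - unitv i + b" if "Poly_Mapping.lookup a i \<noteq> 0"
    using that by (intro poly_mapping_eqI) (auto simp: lookup_add lookup_minus lookup_unitv)
  moreover have "a + b - unitv i = a + (b - unitv i)" if "Poly_Mapping.lookup b i \<noteq> 0"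
    using that by (intro poly_mapping_eqI) (auto simp: lookup_add lookup_minus lookup_unitv)
  ultimately show ?thesis
    by (cases "Poly_Mapping.lookup a i = 0"; cases "Poly_Mapping.lookup b i = 0")
      (simp_all add: pderiv_mp_single mult_single lookup_add single_add[symmetric] algebra_simps)
qed

lemma pderiv_mp_mult: "pderiv_mp i ((p::'n::finite mpoly) * q) = pderiv_mp i p * q + p * pderiv_mp i q"
proof -
  let ?s = "\<lambda>a. Poly_Mapping.single a (Poly_Mapping.lookup p a)"
  let ?t = "\<lambda>b. Poly_Mapping.single b (Poly_Mapping.lookup q b)"
  have "pderiv_mp i ((\<Sum>a\<in>Poly_Mapping.keys p. ?s a) * (\<Sum>b\<in>Poly_Mapping.keys q. ?t b)) =
      pderiv_mp i (\<Sum>a\<in>Poly_Mapping.keys p. ?s a) * (\<Sum>b\<in>Poly_Mapping.keys q. ?t b) +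
      (\<Sum>a\<in>Poly_Mapping.keys p. ?s a) * pderiv_mp i (\<Sum>b\<in>Poly_Mapping.keys q. ?t b)"
    by (simp add: sum_product pderiv_mp_sum pderiv_mp_single_mult_single sum.distrib)
  then show ?thesis
    by (simp only: poly_mapping_sum_single[symmetric])
qed

lemma pderiv_mp_commute: "pderiv_mp i (pderiv_mp j p) = pderiv_mp j (pderiv_mp i p)"
proof -
  have "pderiv_mp i (pderiv_mp j (Poly_Mapping.single a c)) = pderiv_mp j (pderiv_mp i (Poly_Mapping.single a c))" for a c
  proof -
    have "a - unitv j - unitv i = a - unitv i - unitv j"
      by (intro poly_mapping_eqI) (auto simp: lookup_minus lookup_unitv)
    moreover have "Poly_Mapping.lookup a j * Poly_Mapping.lookup (a - unitv j) i =
        Poly_Mapping.lookup a i * Poly_Mapping.lookup (a - unitv i) j"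
      by (auto simp: lookup_minus lookup_unitv)
    then have "(of_nat (Poly_Mapping.lookup a j) * of_nat (Poly_Mapping.lookup (a - unitv j) i) :: complex) =
        of_nat (Poly_Mapping.lookup a i) * of_nat (Poly_Mapping.lookup (a - unitv i) j)"
      by (metis of_nat_mult)
    ultimately show ?thesis
      by (simp add: pderiv_mp_single mult.assoc)
  qed
  then show ?thesis
    by (subst (1 2) poly_mapping_sum_single[of p]) (simp add: pderiv_mp_sum)
qed

lemma pderiv_mp_one [simp]: "pderiv_mp i 1 = 0"
  by (simp add: pderiv_mp_single flip: single_one)

lemma pderiv_mp_const: "pderiv_mp i (Poly_Mapping.single 0 c) = 0"
  by (simp add: pderiv_mp_single)

lemma pderiv_mp_var: "pderiv_mp i (Poly_Mapping.single (unitv j) 1) = (if i = j then 1 else 0)"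
  by (auto simp: pderiv_mp_single lookup_unitv)

lemma weight_ge_pderiv_mp:
  assumes "weight_ge w d p"
  shows "weight_ge w (d - w $ i) (pderiv_mp i p)"
  unfolding pderiv_mp_def
proof (rule weight_ge_sum)
  fix a assume "a \<in> Poly_Mapping.keys p"
  then show "weight_ge w (d - w $ i) (Poly_Mapping.single (a - unitv i) (Poly_Mapping.lookup p a * of_nat (Poly_Mapping.lookup a i)))"
    using assms by (cases "Poly_Mapping.lookup a i = 0")
      (auto simp: weight_ge_def mweight_minus_unitv)
qed

lemma hom_part_pderiv_mp:
  "hom_part w (d - w $ i) (pderiv_mp i p) = pderiv_mp i (hom_part w d p)"
proof -
  have "hom_part w (d - w $ i) (pderiv_mp i p) = (\<Sum>a\<in>Poly_Mapping.keys p. if mweight w a = d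
      then Poly_Mapping.single (a - unitv i) (Poly_Mapping.lookup p a * of_nat (Poly_Mapping.lookup a i)) else 0)"
    unfolding pderiv_mp_def hom_part_sum hom_part_single
  proof (intro sum.cong refl)
    fix a
    show "(if mweight w (a - unitv i) = d - w $ i then Poly_Mapping.single (a - unitv i)
          (Poly_Mapping.lookup p a * of_nat (Poly_Mapping.lookup a i)) else 0) =
        (if mweight w a = d then Poly_Mapping.single (a - unitv i)
          (Poly_Mapping.lookup p a * of_nat (Poly_Mapping.lookup a i)) else 0)"
      by (cases "Poly_Mapping.lookup a i = 0") (auto simp: mweight_minus_unitv)
  qed
  also have "\<dots> = pderiv_mp i (hom_part w d p)"
    unfolding hom_part_conv_sum pderiv_mp_sum by (intro sum.cong refl) (simp add: pderiv_mp_single)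
  finally show ?thesis .
qed

section \<open>The Newton polytope and its faces\<close>

lemma vec_of_mem_newton: "a \<in> Poly_Mapping.keys f \<Longrightarrow> vec_of a \<in> newton f"
  unfolding newton_def by (intro hull_inc) auto

lemma vec_of_inj: "vec_of a = vec_of b \<Longrightarrow> a = b"
  by (rule poly_mapping_eqI) (simp add: vec_of_def vec_eq_iff)

lemma newton_subset_halfspace:
  assumes "\<And>a. a \<in> Poly_Mapping.keys f \<Longrightarrow> m \<le> mweight w a"
  shows "newton f \<subseteq> {u. m \<le> inner u w}"
  unfolding newton_def
proof (rule hull_minimal)
  show "convex {u. m \<le> inner u w}"
    using convex_halfspace_ge[of m w] by (simp add: inner_commute)
qed (use assms in \<open>auto simp: mweight_def\<close>)

lemma ord_f_eq_Min:
  assumes "f \<noteq> 0"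
  shows "ord_f f w = Min (mweight w ` Poly_Mapping.keys f)"
proof -
  let ?m = "Min (mweight w ` Poly_Mapping.keys f)"
  have "?m \<in> mweight w ` Poly_Mapping.keys f"
    using assms by (intro Min_in) auto
  then obtain a where a: "a \<in> Poly_Mapping.keys f" "mweight w a = ?m"
    by auto
  have "newton f \<subseteq> {u. ?m \<le> inner u w}"
    by (rule newton_subset_halfspace) simp
  moreover have "inner (vec_of a) w \<in> (\<lambda>u. inner u w) ` newton f"
    using vec_of_mem_newton[OF a(1)] by auto
  ultimately show ?thesis
    unfolding ord_f_def using a(2) by (intro cInf_eq_minimum) (auto simp: mweight_def)
qed

lemma ord_f_attained:
  assumes "f \<noteq> 0"
  shows "\<exists>a\<in>Poly_Mapping.keys f. mweight w a = ord_f f w"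
proof -
  have "Min (mweight w ` Poly_Mapping.keys f) \<in> mweight w ` Poly_Mapping.keys f"
    using assms by (intro Min_in) auto
  then show ?thesis
    by (auto simp: ord_f_eq_Min[OF assms])
qed

lemma weight_ge_ord_f: "weight_ge w (ord_f f w) f"
  by (cases "f = 0") (auto simp: weight_ge_def ord_f_eq_Min)

lemma ord_f_le: "f \<noteq> 0 \<Longrightarrow> v \<in> newton f \<Longrightarrow> ord_f f w \<le> inner v w"
  using newton_subset_halfspace[of f "ord_f f w" w] weight_ge_ord_f[of w f]
  by (auto simp: weight_ge_def)

lemma face_part_tau_eq_hom_part: "face_part f (tau f w) = hom_part w (ord_f f w) f"
proof -
  have "{a \<in> Poly_Mapping.keys f. vec_of a \<in> tau f w} = {a \<in> Poly_Mapping.keys f. mweight w a = ord_f f w}"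
    by (auto simp: tau_def mweight_def vec_of_mem_newton)
  then show ?thesis
    unfolding face_part_def hom_part_def by simp
qed

lemma hom_part_ord_f_neq_0: "f \<noteq> 0 \<Longrightarrow> hom_part w (ord_f f w) f \<noteq> 0"
  using ord_f_attained[of f w]
  by (metis in_keys_iff lookup_hom_part lookup_zero)

lemma tau_face_of: "f \<noteq> 0 \<Longrightarrow> tau f w face_of newton f"
proof -
  assume f: "f \<noteq> 0"
  have "tau f w = newton f \<inter> {x. w \<bullet> x = ord_f f w}"
    by (auto simp: tau_def inner_commute)
  also have "\<dots> face_of newton f"
    by (rule face_of_Int_supporting_hyperplane_ge)
      (use ord_f_le[OF f] in \<open>auto simp: newton_def inner_commute\<close>)
  finally show ?thesis .
qed

lemma tau_nonempty: "f \<noteq> 0 \<Longrightarrow> tau f w \<noteq> {}"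
  using ord_f_attained[of f w] vec_of_mem_newton by (fastforce simp: tau_def mweight_def)

lemma tau_eq_convex_hull:
  assumes f: "f \<noteq> 0"
  shows "tau f w = convex hull (vec_of ` {a \<in> Poly_Mapping.keys f. mweight w a = ord_f f w})"
proof -
  let ?V = "vec_of ` Poly_Mapping.keys f"
  have T: "tau f w face_of convex hull ?V"
    using tau_face_of[OF f] by (simp add: newton_def)
  have "compact ?V"
    by (rule finite_imp_compact) simp
  then obtain S where S: "S \<subseteq> ?V" "tau f w = convex hull S"
    using T by (rule face_of_convex_hull_subset)
  have "S \<subseteq> tau f w \<inter> ?V"
    using S hull_subset[of S convex] by blast
  then have "tau f w \<subseteq> convex hull (tau f w \<inter> ?V)"
    using S(2) hull_mono by metis
  moreover have "convex hull (tau f w \<inter> ?V) \<subseteq> tau f w"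
    using face_of_imp_convex[OF T] by (simp add: hull_minimal)
  ultimately have "tau f w = convex hull (tau f w \<inter> ?V)"
    by (rule subset_antisym)
  also have "tau f w \<inter> ?V = vec_of ` {a \<in> Poly_Mapping.keys f. mweight w a = ord_f f w}"
    by (auto simp: tau_def vec_of_mem_newton mweight_def)
  finally show ?thesis .
qed

lemma closed_normal_cone:
  assumes f: "f \<noteq> 0" and T: "T \<subseteq> newton f"
  shows "closed (normal_cone f T)"
proof -
  have "normal_cone f T = (\<Inter>u\<in>T. \<Inter>v\<in>newton f. {w. inner u w \<le> inner v w})"
  proof (intro set_eqI iffI)
    fix w assume "w \<in> normal_cone f T"
    then show "w \<in> (\<Inter>u\<in>T. \<Inter>v\<in>newton f. {w. inner u w \<le> inner v w})"
      using ord_f_le[OF f] by (auto simp: normal_cone_def)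
  next
    fix w assume w: "w \<in> (\<Inter>u\<in>T. \<Inter>v\<in>newton f. {w. inner u w \<le> inner v w})"
    obtain a where a: "a \<in> Poly_Mapping.keys f" "mweight w a = ord_f f w"
      using ord_f_attained[OF f] by blast
    have "inner u w = ord_f f w" if u: "u \<in> T" for u
    proof -
      have "inner u w \<le> inner (vec_of a) w"
        using w u vec_of_mem_newton[OF a(1)] by blast
      moreover have "ord_f f w \<le> inner u w"
        using ord_f_le[OF f] u T by blast
      ultimately show ?thesis
        using a(2) by (simp add: mweight_def)
    qed
    then show "w \<in> normal_cone f T"
      by (simp add: normal_cone_def)
  qed
  then show ?thesis
    by (simp only:) (intro closed_INT ballI closed_Collect_le; auto intro: continuous_intros)
qed

section \<open>The polynomial ring is an integral domain\<close>

lemma exists_weight_inj_on: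
  assumes "finite (S :: 'n::finite mono set)"
  shows "\<exists>w. inj_on (mweight w) S"
proof -
  let ?H = "(\<lambda>(a, b). {w::real^'n. (vec_of a - vec_of b) \<bullet> w = 0}) ` {(a, b) \<in> S \<times> S. a \<noteq> b}"
  have "negligible (\<Union>?H)"
  proof (rule negligible_Union)
    have "{(a, b) \<in> S \<times> S. a \<noteq> b} \<subseteq> S \<times> S"
      by blast
    then show "finite ?H"
      using assms finite_subset by blast
  next
    fix T assume "T \<in> ?H"
    then obtain a b where "a \<noteq> b" and T: "T = {w::real^'n. (vec_of a - vec_of b) \<bullet> w = 0}"
      by auto
    then have "vec_of a - vec_of b \<noteq> 0"
      using vec_of_inj by auto
    then show "negligible T"
      unfolding T by (intro negligible_hyperplane) simp
  qed
  then have "\<Union>?H \<noteq> UNIV"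
    by auto
  then obtain w where "w \<notin> \<Union>?H"
    by blast
  have "inj_on (mweight w) S"
  proof (rule inj_onI, rule ccontr)
    fix a b assume "a \<in> S" "b \<in> S" "mweight w a = mweight w b" "a \<noteq> b"
    then have "w \<in> \<Union>?H"
      by (auto simp: mweight_def inner_diff_left)
    with \<open>w \<notin> \<Union>?H\<close> show False
      by blast
  qed
  then show ?thesis ..
qed

lemma hom_part_ord_f_single:
  assumes "inj_on (mweight w) (Poly_Mapping.keys p)" "a \<in> Poly_Mapping.keys p" "mweight w a = ord_f p w"
  shows "hom_part w (ord_f p w) p = Poly_Mapping.single a (Poly_Mapping.lookup p a)"
proof (rule poly_mapping_eqI)
  fix k
  have "k = a" if "k \<in> Poly_Mapping.keys p" "mweight w k = ord_f p w"
    using assms that by (metis inj_onD)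
  then show "Poly_Mapping.lookup (hom_part w (ord_f p w) p) k =
      Poly_Mapping.lookup (Poly_Mapping.single a (Poly_Mapping.lookup p a)) k"
    using assms by (auto simp: lookup_hom_part lookup_single when_def in_keys_iff)
qed

text \<open>For a weight separating the monomials, the initial form of \<open>p * q\<close> is the product
  of the lowest monomials of \<open>p\<close> and \<open>q\<close>.\<close>

lemma mpoly_mult_neq_0:
  assumes "(p::'n::finite mpoly) \<noteq> 0" "q \<noteq> 0"
  shows "p * q \<noteq> 0"
proof -
  obtain w where w: "inj_on (mweight w) (Poly_Mapping.keys p \<union> Poly_Mapping.keys q)"
    using exists_weight_inj_on[of "Poly_Mapping.keys p \<union> Poly_Mapping.keys q"] by auto
  obtain a where a: "a \<in> Poly_Mapping.keys p" "mweight w a = ord_f p w"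
    using ord_f_attained[OF assms(1)] by blast
  obtain b where b: "b \<in> Poly_Mapping.keys q" "mweight w b = ord_f q w"
    using ord_f_attained[OF assms(2)] by blast
  have "hom_part w (ord_f p w + ord_f q w) (p * q) = hom_part w (ord_f p w) p * hom_part w (ord_f q w) q"
    by (intro hom_part_mult weight_ge_ord_f)
  also have "\<dots> = Poly_Mapping.single (a + b) (Poly_Mapping.lookup p a * Poly_Mapping.lookup q b)"
    using a b w by (simp add: hom_part_ord_f_single inj_on_Un mult_single)
  also have "\<dots> \<noteq> 0"
    using a b by (metis in_keys_iff lookup_single_eq lookup_zero mult_eq_0_iff)
  finally show ?thesis
    by auto
qed

lemma mpoly_power_neq_0: "(p::'n::finite mpoly) \<noteq> 0 \<Longrightarrow> p ^ k \<noteq> 0"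
  by (induction k) (auto simp: mpoly_mult_neq_0)

section \<open>The Weyl algebra and the ideal of the b-function\<close>

definition weyl_smult :: "complex \<Rightarrow> 'n::finite weyl \<Rightarrow> 'n weyl" where
  "weyl_smult c P = Poly_Mapping.map (\<lambda>z. c * z) P"

lemma lookup_map_mult [simp]:
  "Poly_Mapping.lookup (Poly_Mapping.map (\<lambda>z. c * z) (p :: 'a \<Rightarrow>\<^sub>0 'b::mult_zero)) k = c * Poly_Mapping.lookup p k"
  by (simp add: Poly_Mapping.map.rep_eq when_def)

lemma lookup_weyl_smult [simp]: "Poly_Mapping.lookup (weyl_smult c P) k = c * Poly_Mapping.lookup P k"
  by (simp add: weyl_smult_def)

lemma weyl_smult_zero [simp]: "weyl_smult 0 P = 0"
  by (rule poly_mapping_eqI) simp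

lemma weyl_smult_add_left: "weyl_smult (a + b) P = weyl_smult a P + weyl_smult b P"
  by (rule poly_mapping_eqI) (simp add: lookup_add distrib_right)

lemma weyl_smult_sum: "weyl_smult a (sum g S) = (\<Sum>x\<in>S. weyl_smult a (g x))"
  by (rule poly_mapping_eqI) (simp add: lookup_sum sum_distrib_left)

lemma weyl_smult_weyl_smult: "weyl_smult a (weyl_smult b P) = weyl_smult (a * b) P"
  by (rule poly_mapping_eqI) simp

lemma weyl_mono_mult_zero_zero:
  fixes c d :: "'n::finite mono"
  shows "weyl_mono_mult 0 0 c d = Poly_Mapping.single (c, d) 1"
proof -
  have "{k. \<forall>i. Poly_Mapping.lookup k i \<le> Poly_Mapping.lookup (0::'n mono) i \<and>
      Poly_Mapping.lookup k i \<le> Poly_Mapping.lookup c i} = {0::'n mono}"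
    by (auto intro!: poly_mapping_eqI)
  then show ?thesis
    by (simp add: weyl_mono_mult_def)
qed

lemma weyl_mult_zero_right [simp]: "weyl_mult P 0 = 0"
  by (simp add: weyl_mult_def)

lemma lookup_weyl_mult:
  assumes "finite S" "Poly_Mapping.keys Q \<subseteq> S"
  shows "Poly_Mapping.lookup (weyl_mult P Q) k = (\<Sum>(a, b)\<in>Poly_Mapping.keys P. \<Sum>(c, d)\<in>S.
      Poly_Mapping.lookup P (a, b) * Poly_Mapping.lookup Q (c, d) * Poly_Mapping.lookup (weyl_mono_mult a b c d) k)"
proof -
  have "Poly_Mapping.lookup (weyl_mult P Q) k = (\<Sum>(a, b)\<in>Poly_Mapping.keys P. \<Sum>(c, d)\<in>Poly_Mapping.keys Q.
      Poly_Mapping.lookup P (a, b) * Poly_Mapping.lookup Q (c, d) * Poly_Mapping.lookup (weyl_mono_mult a b c d) k)"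
    by (simp add: weyl_mult_def lookup_sum split_def)
  also have "\<dots> = (\<Sum>(a, b)\<in>Poly_Mapping.keys P. \<Sum>(c, d)\<in>S.
      Poly_Mapping.lookup P (a, b) * Poly_Mapping.lookup Q (c, d) * Poly_Mapping.lookup (weyl_mono_mult a b c d) k)"
    unfolding split_def using assms
    by (intro sum.cong[OF refl] sum.mono_neutral_left) (auto simp: in_keys_iff)
  finally show ?thesis .
qed

lemma weyl_mult_add_right: "weyl_mult P (A + B) = weyl_mult P A + weyl_mult P B"
proof (rule poly_mapping_eqI)
  fix k
  let ?S = "Poly_Mapping.keys A \<union> Poly_Mapping.keys B"
  have "Poly_Mapping.keys (A + B) \<subseteq> ?S"
    by (rule keys_add)
  then show "Poly_Mapping.lookup (weyl_mult P (A + B)) k = Poly_Mapping.lookup (weyl_mult P A + weyl_mult P B) k"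
    by (simp add: lookup_add lookup_weyl_mult[of ?S] distrib_left distrib_right sum.distrib split_def)
qed

lemma weyl_mult_sum_right: "weyl_mult P (sum g S) = (\<Sum>x\<in>S. weyl_mult P (g x))"
  by (induction S rule: infinite_finite_induct) (auto simp: weyl_mult_add_right)

lemma weyl_mult_smult_right: "weyl_mult P (weyl_smult c A) = weyl_smult c (weyl_mult P A)"
proof (rule poly_mapping_eqI)
  fix k
  have "Poly_Mapping.keys (weyl_smult c A) \<subseteq> Poly_Mapping.keys A"
    by (auto simp: in_keys_iff)
  then show "Poly_Mapping.lookup (weyl_mult P (weyl_smult c A)) k = Poly_Mapping.lookup (weyl_smult c (weyl_mult P A)) k"
    by (simp add: lookup_weyl_mult[of "Poly_Mapping.keys A"] sum_distrib_left split_def ac_simps)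
qed

lemma weyl_mult_const_left: "weyl_mult (Poly_Mapping.single (0, 0) c) P = weyl_smult c P"
proof (cases "c = 0")
  case True
  then show ?thesis
    by (intro poly_mapping_eqI) (simp add: weyl_mult_def)
next
  case False
  then have "weyl_mult (Poly_Mapping.single (0, 0) c) P =
      (\<Sum>(a, b)\<in>Poly_Mapping.keys P. Poly_Mapping.single (a, b) (c * Poly_Mapping.lookup P (a, b)))"
    by (simp add: weyl_mult_def weyl_mono_mult_zero_zero split_def)
  also have "\<dots> = weyl_smult c P"
    by (rule poly_mapping_eqI)
      (simp add: lookup_sum lookup_single when_def split_def in_keys_iff sum.delta' split: if_splits)
  finally show ?thesis .
qed

lemma left_ideal_gen_smult: "P \<in> left_ideal_gen S \<Longrightarrow> weyl_smult c P \<in> left_ideal_gen S"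
  using left_ideal_gen.lmult[of P S "Poly_Mapping.single (0, 0) c"] by (simp add: weyl_mult_const_left)

lemma left_ideal_gen_mono:
  assumes "S \<subseteq> S'"
  shows "left_ideal_gen S \<subseteq> left_ideal_gen S'"
proof
  fix P assume "P \<in> left_ideal_gen S"
  then show "P \<in> left_ideal_gen S'"
    by (induction rule: left_ideal_gen.induct) (use assms in \<open>auto intro: left_ideal_gen.intros\<close>)
qed

lemma poly_at_s_conv_sum:
  "degree p \<le> n \<Longrightarrow> poly_at_s w p = (\<Sum>k\<le>n. weyl_smult (coeff p k) (weyl_pow (euler_s w) k))"
  unfolding poly_at_s_def weyl_mult_const_left
  by (rule sum.mono_neutral_left) (auto simp: coeff_eq_0)

lemma poly_at_s_add: "poly_at_s w (p + q) = poly_at_s w p + poly_at_s w q"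
proof -
  let ?n = "max (degree p) (degree q)"
  have "degree (p + q) \<le> ?n"
    by (rule degree_add_le) auto
  then show ?thesis
    by (simp add: poly_at_s_conv_sum[of _ ?n] weyl_smult_add_left sum.distrib)
qed

lemma poly_at_s_smult: "poly_at_s w (smult c p) = weyl_smult c (poly_at_s w p)"
  by (simp add: poly_at_s_conv_sum[of _ "degree p"] weyl_smult_sum weyl_smult_weyl_smult)

lemma poly_at_s_pCons_0: "poly_at_s w (pCons 0 p) = weyl_mult (euler_s w) (poly_at_s w p)"
proof -
  have "degree (pCons 0 p) \<le> Suc (degree p)"
    by (simp add: degree_pCons_le)
  then have "poly_at_s w (pCons 0 p) =
      (\<Sum>k\<le>Suc (degree p). weyl_smult (coeff (pCons 0 p) k) (weyl_pow (euler_s w) k))"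
    by (rule poly_at_s_conv_sum)
  also have "\<dots> = (\<Sum>k\<le>degree p. weyl_smult (coeff p k) (weyl_pow (euler_s w) (Suc k)))"
    unfolding sum.atMost_Suc_shift by simp
  also have "\<dots> = weyl_mult (euler_s w) (poly_at_s w p)"
    by (simp add: poly_at_s_conv_sum[of p "degree p"] weyl_mult_sum_right weyl_mult_smult_right)
  finally show ?thesis .
qed

definition bfun_ideal :: "'n::finite weyl set \<Rightarrow> real^'n \<Rightarrow> complex poly set" where
  "bfun_ideal I w = {p. poly_at_s w p \<in> init_ideal w I}"

lemma bfun_ideal_zero: "0 \<in> bfun_ideal I w"
  by (simp add: bfun_ideal_def init_ideal_def poly_at_s_def weyl_mult_const_left left_ideal_gen.zero)

lemma bfun_ideal_add: "p \<in> bfun_ideal I w \<Longrightarrow> q \<in> bfun_ideal I w \<Longrightarrow> p + q \<in> bfun_ideal I w"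
  by (simp add: bfun_ideal_def init_ideal_def poly_at_s_add left_ideal_gen.add)

lemma bfun_ideal_smult: "p \<in> bfun_ideal I w \<Longrightarrow> smult c p \<in> bfun_ideal I w"
  by (simp add: bfun_ideal_def init_ideal_def poly_at_s_smult left_ideal_gen_smult)

lemma bfun_ideal_pCons_0: "p \<in> bfun_ideal I w \<Longrightarrow> pCons 0 p \<in> bfun_ideal I w"
  by (simp add: bfun_ideal_def init_ideal_def poly_at_s_pCons_0 left_ideal_gen.lmult)

lemma bfun_ideal_mult: "p \<in> bfun_ideal I w \<Longrightarrow> q * p \<in> bfun_ideal I w"
proof (induction q)
  case 0
  then show ?case by (simp add: bfun_ideal_zero)
next
  case (pCons a q)
  then show ?case
    by (simp add: bfun_ideal_add bfun_ideal_smult bfun_ideal_pCons_0)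
qed

lemma monic_poly_eqI:
  fixes p q :: "'a::field poly"
  assumes "p dvd q" "q dvd p" "lead_coeff p = 1" "lead_coeff q = 1"
  shows "p = q"
proof -
  obtain r where r: "q = p * r"
    using assms(1) by blast
  have "p \<noteq> 0" "q \<noteq> 0"
    using assms(3,4) by auto
  then have "degree r = 0"
    using r assms(1,2) dvd_imp_degree_le[of p q] dvd_imp_degree_le[of q p] by (simp add: degree_mult_eq)
  moreover have "lead_coeff r = 1"
    using r assms(3,4) by (simp add: lead_coeff_mult)
  ultimately have "r = 1"
    by (metis degree_0_id one_pCons)
  then show ?thesis
    using r by simp
qed

lemma dvd_if_min_degree_in_poly_ideal:
  fixes J :: "'a::field poly set"
  assumes add: "\<And>p q. p \<in> J \<Longrightarrow> q \<in> J \<Longrightarrow> p + q \<in> J" and mult: "\<And>p q. p \<in> J \<Longrightarrow> q * p \<in> J"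
    and b: "b \<in> J" "b \<noteq> 0" and min: "\<And>q. q \<in> J \<Longrightarrow> q \<noteq> 0 \<Longrightarrow> degree b \<le> degree q"
    and p: "p \<in> J"
  shows "b dvd p"
proof -
  have "p + (- (p div b)) * b \<in> J"
    using p b by (intro add mult)
  then have "p mod b \<in> J"
    by (simp add: minus_div_mult_eq_mod[symmetric])
  have "p mod b = 0"
  proof (rule ccontr)
    assume "p mod b \<noteq> 0"
    then have "degree (p mod b) < degree b" "degree b \<le> degree (p mod b)"
      using degree_mod_less'[OF b(2)] min[OF \<open>p mod b \<in> J\<close>] by simp_all
    then show False
      by simp
  qed
  then show ?thesis
    by (simp add: mod_eq_0_iff_dvd)
qed

lemma poly_ideal_monic_generator:
  fixes J :: "'a::field poly set"
  assumes zero: "0 \<in> J" and add: "\<And>p q. p \<in> J \<Longrightarrow> q \<in> J \<Longrightarrow> p + q \<in> J"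
    and mult: "\<And>p q. p \<in> J \<Longrightarrow> q * p \<in> J"
  shows "\<exists>!b. J = {p. b dvd p} \<and> (b = 0 \<or> lead_coeff b = 1)"
proof (rule ex_ex1I)
  show "\<exists>b. J = {p. b dvd p} \<and> (b = 0 \<or> lead_coeff b = 1)"
  proof (cases "J \<subseteq> {0}")
    case True
    then have "J = {p. 0 dvd p}"
      using zero by auto
    then show ?thesis by blast
  next
    case False
    then obtain p1 where "p1 \<in> J \<and> p1 \<noteq> 0"
      by auto
    then obtain p0 where p0: "p0 \<in> J \<and> p0 \<noteq> 0" "\<And>q. q \<in> J \<and> q \<noteq> 0 \<Longrightarrow> degree p0 \<le> degree q"
      using ex_has_least_nat[of "\<lambda>p. p \<in> J \<and> p \<noteq> 0" p1 degree] by metis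
    define b where "b = smult (inverse (lead_coeff p0)) p0"
    have b: "b \<in> J" "b \<noteq> 0" "lead_coeff b = 1" "degree b = degree p0"
      using p0(1) mult[of p0 "[:inverse (lead_coeff p0):]"] by (auto simp: b_def)
    have "J = {p. b dvd p}"
    proof (intro set_eqI iffI)
      fix p assume "p \<in> J"
      then show "p \<in> {p. b dvd p}"
        using dvd_if_min_degree_in_poly_ideal[OF add mult b(1,2)] p0(2) b(4) by simp
    next
      fix p assume "p \<in> {p. b dvd p}"
      then obtain r where "p = b * r"
        by auto
      then show "p \<in> J"
        using mult[OF b(1), of r] by (simp add: mult.commute)
    qed
    then show ?thesis
      using b by blast
  qed
next
  fix b1 b2
  assume "J = {p. b1 dvd p} \<and> (b1 = 0 \<or> lead_coeff b1 = 1)" "J = {p. b2 dvd p} \<and> (b2 = 0 \<or> lead_coeff b2 = 1)"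
  then show "b1 = b2"
    by (metis (mono_tags, lifting) dvd_0_left dvd_refl leading_coeff_0_iff mem_Collect_eq monic_poly_eqI zero_neq_one)
qed

lemma bfun_ideal_eq: "bfun_ideal I w = {p. bfun I w dvd p}"
proof -
  have "\<exists>!b. bfun_ideal I w = {p. b dvd p} \<and> (b = 0 \<or> lead_coeff b = 1)"
    by (rule poly_ideal_monic_generator) (auto intro: bfun_ideal_zero bfun_ideal_add bfun_ideal_mult)
  then show ?thesis
    unfolding bfun_def bfun_ideal_def[symmetric] by (rule theI'[THEN conjunct1])
qed

lemma distinct_var_list_UNIV: "set (var_list :: 'n::finite list) = UNIV \<and> distinct (var_list :: 'n list)"
  unfolding var_list_def by (rule someI_ex) (rule finite_distinct_list, simp)

lemma lookup_add_unitv: "Poly_Mapping.lookup (b + unitv j) i = Poly_Mapping.lookup b i + (if j = i then 1 else 0)"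
  by (simp add: lookup_add lookup_unitv)

lemma mono_induct [case_names zero step]:
  assumes "P 0" "\<And>b j. P b \<Longrightarrow> P (b + unitv j)"
  shows "P (b :: 'n::finite mono)"
proof (induction "tdeg b" arbitrary: b)
  case 0
  then have "b = 0"
    by (auto simp: tdeg_def intro!: poly_mapping_eqI)
  then show ?case
    using assms(1) by simp
next
  case (Suc n)
  then have "b \<noteq> 0"
    by (auto simp: tdeg_def)
  then obtain j where j: "Poly_Mapping.lookup b j \<noteq> 0"
    by (metis lookup_zero poly_mapping_eqI)
  define b' where "b' = b - unitv j"
  have b: "b = b' + unitv j"
    using j by (simp add: b'_def minus_unitv_add_unitv)
  have "tdeg b = tdeg b' + 1"
    unfolding tdeg_def b by (simp add: lookup_add_unitv sum.distrib)
  then have "P b'"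
    using Suc by simp
  then show ?case
    using assms(2) b by simp
qed

definition sub_monos :: "'n::finite mono \<Rightarrow> 'n mono set" where
  "sub_monos c = {k. \<forall>i. Poly_Mapping.lookup k i \<le> Poly_Mapping.lookup c i}"

lemma finite_sub_monos: "finite (sub_monos c)"
proof -
  have "Poly_Mapping.lookup ` sub_monos c \<subseteq> PiE UNIV (\<lambda>i. {0..Poly_Mapping.lookup c i})"
    by (auto simp: sub_monos_def PiE_def extensional_def)
  then have "finite (Poly_Mapping.lookup ` sub_monos c)"
    by (rule finite_subset) (intro finite_PiE, auto)
  moreover have "inj_on Poly_Mapping.lookup (sub_monos c)"
    by (auto intro: inj_onI poly_mapping_eqI)
  ultimately show ?thesis
    using finite_imageD by blast
qed

lemma sum_sub_monos_shift:
  "(\<Sum>k\<in>{k \<in> sub_monos c. 1 \<le> Poly_Mapping.lookup k j}. g (k - unitv j)) =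
   (\<Sum>k\<in>{k \<in> sub_monos c. Poly_Mapping.lookup k j < Poly_Mapping.lookup c j}. g k)"
proof (rule sum.reindex_bij_witness[of _ "\<lambda>k. k + unitv j" "\<lambda>k. k - unitv j"])
  fix k assume k: "k \<in> {k \<in> sub_monos c. 1 \<le> Poly_Mapping.lookup k j}"
  then show "k - unitv j + unitv j = k"
    by (simp add: minus_unitv_add_unitv)
  have "Poly_Mapping.lookup k j \<le> Poly_Mapping.lookup c j"
    using k by (simp add: sub_monos_def)
  then have "Poly_Mapping.lookup k j - 1 < Poly_Mapping.lookup c j"
    using k by auto
  with k show "k - unitv j \<in> {k \<in> sub_monos c. Poly_Mapping.lookup k j < Poly_Mapping.lookup c j}"
    by (auto simp: sub_monos_def lookup_minus lookup_unitv intro: le_trans[OF diff_le_self])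
next
  fix k assume "k \<in> {k \<in> sub_monos c. Poly_Mapping.lookup k j < Poly_Mapping.lookup c j}"
  then show "k + unitv j - unitv j = k" "k + unitv j \<in> {k \<in> sub_monos c. 1 \<le> Poly_Mapping.lookup k j}"
    by (auto simp: sub_monos_def lookup_add_unitv lookup_minus intro!: poly_mapping_eqI)
qed (rule refl)

text \<open>\<open>leibniz_coeff b c k\<close> is the coefficient of \<open>x\<^sup>c\<^sup>-\<^sup>k \<partial>\<^sup>b\<^sup>-\<^sup>k\<close> in the normal ordering of
  \<open>\<partial>\<^sup>b x\<^sup>c\<close>, as in the definition of \<open>weyl_mono_mult\<close>.\<close>

definition leibniz_coeff1 :: "nat \<Rightarrow> nat \<Rightarrow> nat \<Rightarrow> nat" where
  "leibniz_coeff1 b c k = fact k * (b choose k) * (c choose k)"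

definition leibniz_coeff :: "'n::finite mono \<Rightarrow> 'n mono \<Rightarrow> 'n mono \<Rightarrow> nat" where
  "leibniz_coeff b c k =
     (\<Prod>i\<in>UNIV. leibniz_coeff1 (Poly_Mapping.lookup b i) (Poly_Mapping.lookup c i) (Poly_Mapping.lookup k i))"

lemma leibniz_coeff1_0 [simp]: "leibniz_coeff1 b c 0 = 1"
  by (simp add: leibniz_coeff1_def)

lemma leibniz_coeff1_Suc:
  "leibniz_coeff1 (Suc b) c (Suc k) = leibniz_coeff1 b c (Suc k) + (c - k) * leibniz_coeff1 b c k"
proof -
  have e: "Suc k * (c choose Suc k) = (c - k) * (c choose k)"
    using binomial_absorption[of k c] binomial_absorb_comp[of c k] by simp
  have "leibniz_coeff1 (Suc b) c (Suc k) =
      fact k * (b choose k) * (Suc k * (c choose Suc k)) + leibniz_coeff1 b c (Suc k)"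
    by (simp add: leibniz_coeff1_def algebra_simps)
  also have "fact k * (b choose k) * (Suc k * (c choose Suc k)) = (c - k) * leibniz_coeff1 b c k"
    by (simp only: e) (simp add: leibniz_coeff1_def algebra_simps)
  finally show ?thesis
    by simp
qed

lemma leibniz_coeff_neq_0:
  assumes "leibniz_coeff b c k \<noteq> 0"
  shows "Poly_Mapping.lookup k i \<le> Poly_Mapping.lookup b i" "Poly_Mapping.lookup k i \<le> Poly_Mapping.lookup c i"
proof -
  have "leibniz_coeff1 (Poly_Mapping.lookup b i) (Poly_Mapping.lookup c i) (Poly_Mapping.lookup k i) \<noteq> 0"
    using assms unfolding leibniz_coeff_def by (metis UNIV_I finite_class.finite_UNIV prod_zero_iff)
  then show "Poly_Mapping.lookup k i \<le> Poly_Mapping.lookup b i" "Poly_Mapping.lookup k i \<le> Poly_Mapping.lookup c i"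
    by (auto simp: leibniz_coeff1_def)
qed

lemma leibniz_coeff_zero_left: "leibniz_coeff 0 c k = (if k = 0 then 1 else 0)"
proof (cases "k = 0")
  case True
  then show ?thesis
    by (simp add: leibniz_coeff_def)
next
  case False
  then obtain i where "Poly_Mapping.lookup k i \<noteq> 0"
    by (metis lookup_zero poly_mapping_eqI)
  then show ?thesis
    using leibniz_coeff_neq_0(1)[of 0 c k i] False by auto
qed

lemma leibniz_coeff_add_unitv:
  "leibniz_coeff (b + unitv j) c k = leibniz_coeff b c k +
     (if 1 \<le> Poly_Mapping.lookup k j
      then (Poly_Mapping.lookup c j - (Poly_Mapping.lookup k j - 1)) * leibniz_coeff b c (k - unitv j) else 0)"
proof -
  let ?r = "\<lambda>b k. \<Prod>i\<in>UNIV - {j}. leibniz_coeff1 (Poly_Mapping.lookup b i) (Poly_Mapping.lookup c i) (Poly_Mapping.lookup k i)"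
  have split: "leibniz_coeff b c k =
      leibniz_coeff1 (Poly_Mapping.lookup b j) (Poly_Mapping.lookup c j) (Poly_Mapping.lookup k j) * ?r b k" for b k
    unfolding leibniz_coeff_def by (rule prod.remove) auto
  have "?r (b + unitv j) k = ?r b k" "?r b (k - unitv j) = ?r b k"
    by (auto simp: lookup_add_unitv lookup_minus lookup_unitv intro!: prod.cong)
  then show ?thesis
    by (cases "Poly_Mapping.lookup k j")
      (simp_all add: split[of "b + unitv j"] split[of b] lookup_add_unitv lookup_minus lookup_unitv
        leibniz_coeff1_Suc algebra_simps)
qed

section \<open>Modules over the Weyl algebra\<close>

text \<open>\<open>act_mult\<close> shows that the normal-ordering formula \<open>weyl_mult\<close> is composition of
  operators on every such module; for rational functions this makes annihilators left ideals.\<close>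

locale weyl_module =
  fixes C :: "complex \<Rightarrow> 'r::comm_ring_1" and X :: "'n::finite \<Rightarrow> 'r" and D :: "'n \<Rightarrow> 'r \<Rightarrow> 'r"
  assumes C_add: "C (a + b) = C a + C b" and C_mult: "C (a * b) = C a * C b" and C_one: "C 1 = 1"
    and D_add: "D i (u + v) = D i u + D i v"
    and D_mult: "D i (u * v) = D i u * v + u * D i v"
    and D_C: "D i (C c) = 0"
    and D_X: "D i (X j) = (if i = j then 1 else 0)"
    and D_commute: "D i (D j u) = D j (D i u)"
begin

lemma C_zero [simp]: "C 0 = 0"
  using C_add[of 0 0] by simp

lemma C_of_nat [simp]: "C (of_nat n) = of_nat n"
  by (induction n) (simp_all add: C_add C_one)

lemma D_zero [simp]: "D i 0 = 0"
  using D_add[of i 0 0] by simp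

lemma D_sum: "D i (sum g S) = (\<Sum>x\<in>S. D i (g x))"
  by (induction S rule: infinite_finite_induct) (auto simp: D_add)

lemma D_one [simp]: "D i 1 = 0"
  using D_mult[of i 1 1] by simp

lemma D_of_nat [simp]: "D i (of_nat n) = 0"
  by (induction n) (simp_all add: D_add)

lemma D_of_nat_mult: "D i (of_nat n * u) = of_nat n * D i u"
  by (simp add: D_mult)

lemma D_power: "D i (u ^ n) = of_nat n * u ^ (n - 1) * D i u"
proof (induction n)
  case (Suc n)
  then show ?case
    by (cases n) (simp_all add: D_mult algebra_simps)
qed simp

lemma D_prod_eq_0: "(\<And>x. x \<in> S \<Longrightarrow> D i (g x) = 0) \<Longrightarrow> D i (prod g S) = 0"
  by (induction S rule: infinite_finite_induct) (auto simp: D_mult)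

definition xpow :: "'n mono \<Rightarrow> 'r" where
  "xpow c = (\<Prod>i\<in>UNIV. X i ^ Poly_Mapping.lookup c i)"

definition Dpow :: "'n mono \<Rightarrow> 'r \<Rightarrow> 'r" where
  "Dpow b u = foldr (\<lambda>i. D i ^^ Poly_Mapping.lookup b i) var_list u"

definition mono_act :: "'n mono \<times> 'n mono \<Rightarrow> 'r \<Rightarrow> 'r" where
  "mono_act k u = xpow (fst k) * Dpow (snd k) u"

definition act :: "'n weyl \<Rightarrow> 'r \<Rightarrow> 'r" where
  "act P u = (\<Sum>k\<in>Poly_Mapping.keys P. C (Poly_Mapping.lookup P k) * mono_act k u)"

lemma xpow_add: "xpow (a + c) = xpow a * xpow c"
  by (simp add: xpow_def lookup_add power_add prod.distrib)

lemma D_xpow: "D j (xpow c) = of_nat (Poly_Mapping.lookup c j) * xpow (c - unitv j)"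
proof -
  have split: "xpow c = X j ^ Poly_Mapping.lookup c j * (\<Prod>i\<in>UNIV - {j}. X i ^ Poly_Mapping.lookup c i)" for c
    unfolding xpow_def by (rule prod.remove) auto
  have "D j (\<Prod>i\<in>UNIV - {j}. X i ^ Poly_Mapping.lookup c i) = 0"
    by (rule D_prod_eq_0) (simp add: D_power D_X)
  moreover have "(\<Prod>i\<in>UNIV - {j}. X i ^ Poly_Mapping.lookup (c - unitv j) i) =
      (\<Prod>i\<in>UNIV - {j}. X i ^ Poly_Mapping.lookup c i)"
    by (rule prod.cong) (auto simp: lookup_minus lookup_unitv)
  ultimately show ?thesis
    by (simp add: split[of c] split[of "c - unitv j"] D_mult D_power D_X lookup_minus lookup_unitv)
qed

lemma funpow_D_commute: "(D i ^^ n) (D j u) = D j ((D i ^^ n) u)"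
  by (induction n) (simp_all add: D_commute)

lemma foldr_D_step:
  "distinct xs \<Longrightarrow> j \<in> set xs \<Longrightarrow>
   foldr (\<lambda>i. D i ^^ (g i + (if j = i then 1 else 0))) xs u = D j (foldr (\<lambda>i. D i ^^ g i) xs u)"
proof (induction xs)
  case (Cons i xs)
  show ?case
  proof (cases "i = j")
    case True
    then have "foldr (\<lambda>i. D i ^^ (g i + (if j = i then 1 else 0))) xs u = foldr (\<lambda>i. D i ^^ g i) xs u"
      using Cons.prems by (intro foldr_cong) auto
    then show ?thesis
      using True by simp
  next
    case False
    then show ?thesis
      using Cons by (simp add: funpow_D_commute)
  qed
qed simp

lemma Dpow_add_unitv: "Dpow (b + unitv j) u = D j (Dpow b u)"
  unfolding Dpow_def lookup_add_unitv using distinct_var_list_UNIV[where 'n='n]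
  by (intro foldr_D_step) auto

lemma Dpow_zero [simp]: "Dpow 0 u = u"
proof -
  have "foldr (\<lambda>i. D i ^^ Poly_Mapping.lookup 0 i) xs u = u" for xs :: "'n list"
    by (induction xs) auto
  then show ?thesis
    by (simp add: Dpow_def)
qed

lemma Dpow_unitv: "Dpow (unitv j) u = D j u"
  using Dpow_add_unitv[of 0 j u] by simp

lemma Dpow_add_arg: "Dpow b (u + v) = Dpow b u + Dpow b v"
  by (induction b arbitrary: u v rule: mono_induct) (simp_all add: Dpow_add_unitv D_add)

lemma Dpow_Cmult: "Dpow b (C c * u) = C c * Dpow b u"
  by (induction b arbitrary: u rule: mono_induct) (simp_all add: Dpow_add_unitv D_mult D_C)

lemma Dpow_add: "Dpow (b + d) u = Dpow b (Dpow d u)"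
proof (induction b rule: mono_induct)
  case (step b j)
  have "Dpow (b + unitv j + d) u = Dpow ((b + d) + unitv j) u"
    by (simp add: ac_simps)
  then show ?case
    by (simp add: Dpow_add_unitv step)
qed simp

lemma D_xpow_mult_Dpow:
  "D j (xpow c * Dpow b v) =
     xpow c * Dpow (b + unitv j) v + of_nat (Poly_Mapping.lookup c j) * xpow (c - unitv j) * Dpow b v"
  by (simp add: D_mult D_xpow Dpow_add_unitv ac_simps)

lemma leibniz_sum_shift:
  "(\<Sum>k\<in>sub_monos c. if 1 \<le> Poly_Mapping.lookup k j
      then of_nat ((Poly_Mapping.lookup c j - (Poly_Mapping.lookup k j - 1)) * leibniz_coeff b c (k - unitv j)) *
        xpow (c - k) * Dpow (b + unitv j - k) v else 0) =
   (\<Sum>k\<in>sub_monos c. of_nat (leibniz_coeff b c k) * of_nat (Poly_Mapping.lookup c j - Poly_Mapping.lookup k j) *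
      xpow (c - k - unitv j) * Dpow (b - k) v)"
  (is "?L = sum ?U ?S")
proof -
  let ?cj = "Poly_Mapping.lookup c j"
  have "?L = (\<Sum>k\<in>{k \<in> ?S. 1 \<le> Poly_Mapping.lookup k j}. ?U (k - unitv j))"
  proof (subst sum.inter_filter[OF finite_sub_monos, symmetric], intro sum.cong refl)
    fix k assume "k \<in> {k \<in> ?S. 1 \<le> Poly_Mapping.lookup k j}"
    then have "1 \<le> Poly_Mapping.lookup k j"
      by simp
    moreover have "c - (k - unitv j) - unitv j = c - k" "b - (k - unitv j) = b + unitv j - k"
      using \<open>1 \<le> Poly_Mapping.lookup k j\<close>
      by (auto intro!: poly_mapping_eqI simp: lookup_add lookup_minus lookup_unitv)
    ultimately show "of_nat ((?cj - (Poly_Mapping.lookup k j - 1)) * leibniz_coeff b c (k - unitv j)) *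
        xpow (c - k) * Dpow (b + unitv j - k) v = ?U (k - unitv j)"
      by (simp add: lookup_minus lookup_unitv ac_simps)
  qed
  also have "\<dots> = (\<Sum>k\<in>{k \<in> ?S. Poly_Mapping.lookup k j < ?cj}. ?U k)"
    by (rule sum_sub_monos_shift)
  also have "\<dots> = sum ?U ?S"
  proof (intro sum.mono_neutral_left finite_sub_monos ballI)
    fix k assume "k \<in> ?S - {k \<in> ?S. Poly_Mapping.lookup k j < ?cj}"
    then have "?cj - Poly_Mapping.lookup k j = 0"
      by auto
    then show "?U k = 0"
      by simp
  qed auto
  finally show ?thesis .
qed

lemma leibniz_sum_add_unitv:
  "(\<Sum>k\<in>sub_monos c. of_nat (leibniz_coeff (b + unitv j) c k) * xpow (c - k) * Dpow (b + unitv j - k) v) =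
   (\<Sum>k\<in>sub_monos c. of_nat (leibniz_coeff b c k) * xpow (c - k) * Dpow (b - k + unitv j) v) +
   (\<Sum>k\<in>sub_monos c. of_nat (leibniz_coeff b c k) * of_nat (Poly_Mapping.lookup c j - Poly_Mapping.lookup k j) *
      xpow (c - k - unitv j) * Dpow (b - k) v)"
proof -
  let ?S = "sub_monos c"
  have "of_nat (leibniz_coeff b c k) * xpow (c - k) * Dpow (b + unitv j - k) v =
      of_nat (leibniz_coeff b c k) * xpow (c - k) * Dpow (b - k + unitv j) v" for k
  proof (cases "leibniz_coeff b c k = 0")
    case False
    then have "b + unitv j - k = b - k + unitv j"
      using leibniz_coeff_neq_0(1)[OF False]
      by (auto intro!: poly_mapping_eqI simp: lookup_add lookup_minus lookup_unitv)
    then show ?thesis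
      by simp
  qed simp
  moreover have "(\<Sum>k\<in>?S. of_nat (leibniz_coeff (b + unitv j) c k) * xpow (c - k) * Dpow (b + unitv j - k) v) =
      (\<Sum>k\<in>?S. of_nat (leibniz_coeff b c k) * xpow (c - k) * Dpow (b + unitv j - k) v) +
      (\<Sum>k\<in>?S. if 1 \<le> Poly_Mapping.lookup k j
        then of_nat ((Poly_Mapping.lookup c j - (Poly_Mapping.lookup k j - 1)) * leibniz_coeff b c (k - unitv j)) *
          xpow (c - k) * Dpow (b + unitv j - k) v else 0)"
    by (subst sum.distrib[symmetric]) (rule sum.cong[OF refl], auto simp: leibniz_coeff_add_unitv distrib_right)
  ultimately show ?thesis
    unfolding leibniz_sum_shift by simp
qed

text \<open>Induction on \<open>b\<close>: one more \<open>\<partial>\<^sub>j\<close> either hits \<open>\<partial>\<^sup>b\<^sup>-\<^sup>k v\<close> or lowers \<open>x\<^sup>c\<^sup>-\<^sup>k\<close>,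
  and the two contributions recombine by the Pascal-type recursion \<open>leibniz_coeff_add_unitv\<close>.\<close>

lemma Dpow_xpow_mult:
  "Dpow b (xpow c * v) = (\<Sum>k\<in>sub_monos c. of_nat (leibniz_coeff b c k) * xpow (c - k) * Dpow (b - k) v)"
proof (induction b rule: mono_induct)
  case zero
  have "(\<Sum>k\<in>sub_monos c. of_nat (leibniz_coeff 0 c k) * xpow (c - k) * Dpow (0 - k) v) =
      (\<Sum>k\<in>sub_monos c. if k = 0 then xpow c * v else 0)"
    by (intro sum.cong refl) (simp add: leibniz_coeff_zero_left)
  also have "\<dots> = xpow c * v"
    by (subst sum.delta[OF finite_sub_monos]) (simp add: sub_monos_def)
  finally show ?case
    by simp
next
  case (step b j)
  have "Dpow (b + unitv j) (xpow c * v) =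
      (\<Sum>k\<in>sub_monos c. D j (of_nat (leibniz_coeff b c k) * (xpow (c - k) * Dpow (b - k) v)))"
    by (simp add: Dpow_add_unitv step D_sum mult.assoc)
  also have "\<dots> = (\<Sum>k\<in>sub_monos c. of_nat (leibniz_coeff b c k) * xpow (c - k) * Dpow (b - k + unitv j) v) +
      (\<Sum>k\<in>sub_monos c. of_nat (leibniz_coeff b c k) * of_nat (Poly_Mapping.lookup c j - Poly_Mapping.lookup k j) *
        xpow (c - k - unitv j) * Dpow (b - k) v)"
    by (simp add: D_of_nat_mult D_xpow_mult_Dpow lookup_minus sum.distrib distrib_left mult.assoc)
  finally show ?case
    unfolding leibniz_sum_add_unitv .
qed

lemma act_conv_sum:
  "finite S \<Longrightarrow> Poly_Mapping.keys P \<subseteq> S \<Longrightarrow> act P u = (\<Sum>k\<in>S. C (Poly_Mapping.lookup P k) * mono_act k u)"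
  unfolding act_def by (rule sum.mono_neutral_left) (auto simp: in_keys_iff)

lemma act_add: "act (P + Q) u = act P u + act Q u"
proof -
  let ?S = "Poly_Mapping.keys P \<union> Poly_Mapping.keys Q"
  have "Poly_Mapping.keys (P + Q) \<subseteq> ?S"
    by (rule keys_add)
  then show ?thesis
    by (simp add: act_conv_sum[of ?S] lookup_add C_add distrib_right sum.distrib)
qed

lemma Dpow_zero_arg [simp]: "Dpow b 0 = 0"
  using Dpow_add_arg[of b 0 0] by simp

lemma act_zero [simp]: "act 0 u = 0"
  and act_zero_arg [simp]: "act P 0 = 0"
  by (simp_all add: act_def mono_act_def)

lemma act_sum: "act (sum g S) u = (\<Sum>x\<in>S. act (g x) u)"
  by (induction S rule: infinite_finite_induct) (auto simp: act_add)

lemma act_single: "act (Poly_Mapping.single k c) u = C c * mono_act k u"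
  by (subst act_conv_sum[of "{k}"]) auto

lemma act_map_mult: "act (Poly_Mapping.map (\<lambda>z. s * z) P) u = C s * act P u"
proof -
  have "Poly_Mapping.keys (Poly_Mapping.map (\<lambda>z. s * z) P) \<subseteq> Poly_Mapping.keys P"
    by (auto simp: in_keys_iff)
  then have "act (Poly_Mapping.map (\<lambda>z. s * z) P) u =
      (\<Sum>k\<in>Poly_Mapping.keys P. C s * (C (Poly_Mapping.lookup P k) * mono_act k u))"
    by (simp add: act_conv_sum[of "Poly_Mapping.keys P"] C_mult mult.assoc)
  then show ?thesis
    by (simp add: act_def sum_distrib_left)
qed

lemma mono_act_zero [simp]: "mono_act k 0 = 0"
  by (simp add: mono_act_def)

lemma mono_act_add: "mono_act k (u + v) = mono_act k u + mono_act k v"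
  by (simp add: mono_act_def Dpow_add_arg distrib_left)

lemma mono_act_sum: "mono_act k (sum g S) = (\<Sum>x\<in>S. mono_act k (g x))"
  by (induction S rule: infinite_finite_induct) (auto simp: mono_act_add)

lemma mono_act_Cmult: "mono_act k (C c * u) = C c * mono_act k u"
  unfolding mono_act_def Dpow_Cmult by (simp add: ac_simps)

lemma act_weyl_mono_mult: "act (weyl_mono_mult a b c d) u = mono_act (a, b) (mono_act (c, d) u)"
proof -
  let ?K = "{k. \<forall>i. Poly_Mapping.lookup k i \<le> Poly_Mapping.lookup b i \<and> Poly_Mapping.lookup k i \<le> Poly_Mapping.lookup c i}"
  let ?t = "\<lambda>k. xpow a * (of_nat (leibniz_coeff b c k) * xpow (c - k) * Dpow (b - k) (Dpow d u))"
  have "act (weyl_mono_mult a b c d) u = (\<Sum>k\<in>?K. of_nat (leibniz_coeff b c k) * mono_act (a + c - k, b + d - k) u)"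
  proof -
    have "(\<Prod>i\<in>UNIV. fact (Poly_Mapping.lookup k i) * (Poly_Mapping.lookup b i choose Poly_Mapping.lookup k i) *
        (Poly_Mapping.lookup c i choose Poly_Mapping.lookup k i)) = leibniz_coeff b c k" for k
      by (simp add: leibniz_coeff_def leibniz_coeff1_def)
    then show ?thesis
      unfolding weyl_mono_mult_def act_sum act_single by simp
  qed
  also have "\<dots> = sum ?t ?K"
  proof (rule sum.cong[OF refl])
    fix k assume "k \<in> ?K"
    then have e: "a + c - k = a + (c - k)" "b + d - k = (b - k) + d"
      by (auto intro!: poly_mapping_eqI simp: lookup_add lookup_minus)
    show "of_nat (leibniz_coeff b c k) * mono_act (a + c - k, b + d - k) u = ?t k"
      unfolding mono_act_def fst_conv snd_conv e xpow_add Dpow_add by (simp add: ac_simps)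
  qed
  also have "\<dots> = sum ?t (sub_monos c)"
  proof (intro sum.mono_neutral_left finite_sub_monos ballI)
    show "?K \<subseteq> sub_monos c"
      by (auto simp: sub_monos_def)
    fix k assume "k \<in> sub_monos c - ?K"
    then have "leibniz_coeff b c k = 0"
      using leibniz_coeff_neq_0[of b c k] by (auto simp: sub_monos_def)
    then show "?t k = 0"
      by simp
  qed
  also have "\<dots> = mono_act (a, b) (mono_act (c, d) u)"
    by (simp add: mono_act_def Dpow_xpow_mult sum_distrib_left)
  finally show ?thesis .
qed

lemma act_mult: "act (weyl_mult P Q) u = act P (act Q u)"
proof -
  have "act (weyl_mult P Q) u = (\<Sum>p\<in>Poly_Mapping.keys P. \<Sum>q\<in>Poly_Mapping.keys Q.
      C (Poly_Mapping.lookup P p) * (C (Poly_Mapping.lookup Q q) * mono_act p (mono_act q u)))"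
    unfolding weyl_mult_def by (simp add: split_def act_sum act_map_mult act_weyl_mono_mult C_mult ac_simps)
  also have "\<dots> = act P (act Q u)"
    by (simp add: act_def mono_act_sum mono_act_Cmult sum_distrib_left)
  finally show ?thesis .
qed

lemma act_left_ideal_gen:
  assumes "\<And>P. P \<in> S \<Longrightarrow> act P u = 0"
  shows "A \<in> left_ideal_gen S \<Longrightarrow> act A u = 0"
  by (induction rule: left_ideal_gen.induct) (auto simp: assms act_add act_mult)

end

section \<open>Rational functions\<close>

text \<open>The library makes \<open>'a \<Rightarrow>\<^sub>0 'b\<close> an integral domain only for linearly ordered
  exponents, so the fraction field is built over a copy of \<open>'n mpoly\<close> whose domain property
  comes from \<open>mpoly_mult_neq_0\<close>.\<close>

typedef (overloaded) 'n mpoly_idom = "UNIV :: 'n::finite mpoly set"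
  morphisms of_idom to_idom by simp

setup_lifting type_definition_mpoly_idom

instantiation mpoly_idom :: (finite) idom
begin

lift_definition zero_mpoly_idom :: "'n::finite mpoly_idom" is 0 .
lift_definition one_mpoly_idom :: "'n::finite mpoly_idom" is 1 .
lift_definition plus_mpoly_idom :: "'n::finite mpoly_idom \<Rightarrow> 'n mpoly_idom \<Rightarrow> 'n mpoly_idom" is "(+)" .
lift_definition minus_mpoly_idom :: "'n::finite mpoly_idom \<Rightarrow> 'n mpoly_idom \<Rightarrow> 'n mpoly_idom" is "(-)" .
lift_definition uminus_mpoly_idom :: "'n::finite mpoly_idom \<Rightarrow> 'n mpoly_idom" is uminus .
lift_definition times_mpoly_idom :: "'n::finite mpoly_idom \<Rightarrow> 'n mpoly_idom \<Rightarrow> 'n mpoly_idom" is "(*)" .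

instance
proof
  fix a b c :: "'n::finite mpoly_idom"
  show "a * b * c = a * (b * c)" by transfer (simp add: ac_simps)
  show "a * b = b * a" by transfer (simp add: ac_simps)
  show "1 * a = a" by transfer simp
  show "a + b + c = a + (b + c)" by transfer (simp add: ac_simps)
  show "a + b = b + a" by transfer (simp add: ac_simps)
  show "0 + a = a" by transfer simp
  show "- a + a = 0" by transfer simp
  show "a - b = a + - b" by transfer simp
  show "(a + b) * c = a * c + b * c" by transfer (simp add: distrib_right)
  show "(0::'n mpoly_idom) \<noteq> 1" by transfer simp
  show "a \<noteq> 0 \<Longrightarrow> b \<noteq> 0 \<Longrightarrow> a * b \<noteq> 0" by transfer (rule mpoly_mult_neq_0)
  show "0 * a = 0" by transfer simp
  show "a * 0 = 0" by transfer simp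
  show "a * (b + c) = a * b + a * c" by transfer (simp add: distrib_left)
qed

end

lift_definition pderiv_idom :: "'n \<Rightarrow> 'n::finite mpoly_idom \<Rightarrow> 'n mpoly_idom" is pderiv_mp .

lemma pderiv_idom_one [simp]: "pderiv_idom i 1 = 0"
  by transfer simp

lemma pderiv_idom_add: "pderiv_idom i (a + b) = pderiv_idom i a + pderiv_idom i b"
  by transfer (rule pderiv_mp_add)

lemma pderiv_idom_mult: "pderiv_idom i (a * b) = pderiv_idom i a * b + a * pderiv_idom i b"
  by transfer (rule pderiv_mp_mult)

lemma pderiv_idom_diff: "pderiv_idom i (a - b) = pderiv_idom i a - pderiv_idom i b"
  by transfer (rule pderiv_mp_diff)

lemma pderiv_idom_commute: "pderiv_idom i (pderiv_idom j a) = pderiv_idom j (pderiv_idom i a)"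
  by transfer (rule pderiv_mp_commute)

lemma to_idom_add: "to_idom (p + q) = to_idom p + to_idom q"
  and to_idom_mult: "to_idom (p * q) = to_idom p * to_idom q"
  and to_idom_uminus: "to_idom (- p) = - to_idom p"
  and to_idom_zero: "to_idom 0 = 0"
  and to_idom_one: "to_idom 1 = 1"
  and pderiv_idom_to_idom: "pderiv_idom i (to_idom p) = to_idom (pderiv_mp i p)"
  by (simp_all add: plus_mpoly_idom_def times_mpoly_idom_def uminus_mpoly_idom_def zero_mpoly_idom_def
      one_mpoly_idom_def pderiv_idom_def to_idom_inverse)

definition to_fract :: "'n::finite mpoly \<Rightarrow> 'n mpoly_idom fract" where
  "to_fract p = Fract (to_idom p) 1"

lift_definition fract_pderiv :: "'n \<Rightarrow> 'n::finite mpoly_idom fract \<Rightarrow> 'n mpoly_idom fract"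
  is "\<lambda>i x. (pderiv_idom i (fst x) * snd x - fst x * pderiv_idom i (snd x), snd x * snd x)"
proof -
  fix i :: 'n and x y :: "'n mpoly_idom \<times> 'n mpoly_idom"
  assume "fractrel x y"
  then obtain a b c d where xy: "x = (a, b)" "y = (c, d)" "b \<noteq> 0" "d \<noteq> 0" "a * d = c * b"
    by (cases x, cases y) auto
  have "pderiv_idom i a * d + a * pderiv_idom i d = pderiv_idom i c * b + c * pderiv_idom i b"
    using arg_cong[OF xy(5), of "pderiv_idom i"] by (simp add: pderiv_idom_mult)
  then have "(pderiv_idom i a * b - a * pderiv_idom i b) * (d * d) = (pderiv_idom i c * d - c * pderiv_idom i d) * (b * b)"
    using xy(5) by algebra
  then show "fractrel (pderiv_idom i (fst x) * snd x - fst x * pderiv_idom i (snd x), snd x * snd x)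
      (pderiv_idom i (fst y) * snd y - fst y * pderiv_idom i (snd y), snd y * snd y)"
    using xy by simp
qed

lemma fract_pderiv_Fract:
  "b \<noteq> 0 \<Longrightarrow> fract_pderiv i (Fract a b) = Fract (pderiv_idom i a * b - a * pderiv_idom i b) (b * b)"
  by transfer simp

lemma to_fract_add: "to_fract (p + q) = to_fract p + to_fract q"
  by (simp add: to_fract_def to_idom_add)

lemma to_fract_mult: "to_fract (p * q) = to_fract p * to_fract q"
  by (simp add: to_fract_def to_idom_mult)

lemma to_fract_diff: "to_fract (p - q) = to_fract p - to_fract q"
  using to_fract_add[of p "- q"] by (simp add: to_fract_def to_idom_uminus)

lemma to_fract_zero [simp]: "to_fract 0 = 0"
  and to_fract_one [simp]: "to_fract 1 = 1"
  by (simp_all add: to_fract_def to_idom_zero to_idom_one Zero_fract_def One_fract_def)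

lemma to_fract_power: "to_fract (p ^ n) = to_fract p ^ n"
  by (induction n) (simp_all add: to_fract_mult)

lemma to_fract_sum: "to_fract (sum g S) = (\<Sum>x\<in>S. to_fract (g x))"
  by (induction S rule: infinite_finite_induct) (simp_all add: to_fract_add)

lemma to_fract_prod: "to_fract (prod g S) = (\<Prod>x\<in>S. to_fract (g x))"
  by (induction S rule: infinite_finite_induct) (simp_all add: to_fract_mult)

lemma to_fract_of_nat: "to_fract (of_nat n) = of_nat n"
  by (induction n) (simp_all add: to_fract_add)

lemma to_fract_inject: "to_fract p = to_fract q \<longleftrightarrow> p = q"
  by (simp add: to_fract_def eq_fract to_idom_inject)

lemma to_fract_eq_0_iff [simp]: "to_fract p = 0 \<longleftrightarrow> p = 0"
  using to_fract_inject[of p 0] by simp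

lemma fract_pderiv_to_fract: "fract_pderiv i (to_fract p) = to_fract (pderiv_mp i p)"
  by (simp add: to_fract_def fract_pderiv_Fract pderiv_idom_to_idom)

lemma fract_pderiv_add: "fract_pderiv i (x + y) = fract_pderiv i x + fract_pderiv i y"
proof -
  obtain a b c d where "x = Fract a b" "b \<noteq> 0" "y = Fract c d" "d \<noteq> 0"
    by (metis Fract_cases)
  then show ?thesis
    by (simp add: fract_pderiv_Fract pderiv_idom_add pderiv_idom_mult eq_fract algebra_simps)
qed

lemma fract_pderiv_mult: "fract_pderiv i (x * y) = fract_pderiv i x * y + x * fract_pderiv i y"
proof -
  obtain a b c d where "x = Fract a b" "b \<noteq> 0" "y = Fract c d" "d \<noteq> 0"
    by (metis Fract_cases)
  then show ?thesis
    by (simp add: fract_pderiv_Fract pderiv_idom_add pderiv_idom_mult eq_fract algebra_simps)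
qed

lemma fract_pderiv_commute: "fract_pderiv i (fract_pderiv j x) = fract_pderiv j (fract_pderiv i x)"
proof -
  obtain a b where "x = Fract a b" "b \<noteq> 0"
    by (cases x)
  then show ?thesis
    by (simp add: fract_pderiv_Fract pderiv_idom_add pderiv_idom_mult pderiv_idom_diff eq_fract algebra_simps
        pderiv_idom_commute)
qed

lemma fract_pderiv_inverse: "u \<noteq> 0 \<Longrightarrow> fract_pderiv i (inverse u) = - fract_pderiv i u * inverse u ^ 2"
proof -
  assume u: "u \<noteq> 0"
  have "0 = fract_pderiv i (u * inverse u)"
    using u by (simp add: fract_pderiv_to_fract[of i 1, simplified])
  also have "\<dots> = fract_pderiv i u * inverse u + u * fract_pderiv i (inverse u)"
    by (rule fract_pderiv_mult)
  finally have "u * fract_pderiv i (inverse u) = - fract_pderiv i u * inverse u"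
    by (simp add: eq_neg_iff_add_eq_0 add.commute)
  then have "fract_pderiv i (inverse u) = inverse u * (- fract_pderiv i u * inverse u)"
    using u by (simp add: field_simps)
  then show ?thesis
    by (simp add: power2_eq_square ac_simps)
qed

interpretation ratfun: weyl_module "\<lambda>c. to_fract (Poly_Mapping.single 0 c)"
  "\<lambda>j. to_fract (Poly_Mapping.single (unitv j) 1)" fract_pderiv
proof
  fix a b :: complex and i j u v
  show "to_fract (Poly_Mapping.single 0 (a + b)) = to_fract (Poly_Mapping.single 0 a) + to_fract (Poly_Mapping.single 0 b)"
    by (simp add: to_fract_add[symmetric] single_add)
  show "to_fract (Poly_Mapping.single 0 (a * b)) = to_fract (Poly_Mapping.single 0 a) * to_fract (Poly_Mapping.single 0 b)"
    by (simp add: to_fract_mult[symmetric] mult_single)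
  show "to_fract (Poly_Mapping.single 0 1) = 1"
    by simp
  show "fract_pderiv i (u + v) = fract_pderiv i u + fract_pderiv i v"
    by (rule fract_pderiv_add)
  show "fract_pderiv i (u * v) = fract_pderiv i u * v + u * fract_pderiv i v"
    by (rule fract_pderiv_mult)
  show "fract_pderiv i (to_fract (Poly_Mapping.single 0 a)) = 0"
    by (simp add: fract_pderiv_to_fract pderiv_mp_const)
  show "fract_pderiv i (to_fract (Poly_Mapping.single (unitv j) 1)) = (if i = j then 1 else 0)"
    by (simp add: fract_pderiv_to_fract pderiv_mp_var)
  show "fract_pderiv i (fract_pderiv j u) = fract_pderiv j (fract_pderiv i u)"
    by (rule fract_pderiv_commute)
qed

abbreviation const_fract :: "complex \<Rightarrow> 'n::finite mpoly_idom fract" where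
  "const_fract c \<equiv> to_fract (Poly_Mapping.single 0 c)"

abbreviation var_fract :: "'n::finite \<Rightarrow> 'n mpoly_idom fract" where
  "var_fract j \<equiv> to_fract (Poly_Mapping.single (unitv j) 1)"

lemma ratfun_xpow_eq_to_fract: "ratfun.xpow a = to_fract (xmono a)"
proof -
  have "(\<Sum>i\<in>UNIV. Poly_Mapping.single i (Poly_Mapping.lookup a i)) = a"
    by (rule poly_mapping_eqI) (simp add: lookup_sum lookup_single when_def)
  then have "(\<Prod>i\<in>UNIV. Poly_Mapping.single (unitv i) 1 ^ Poly_Mapping.lookup a i) = xmono a"
    by (simp add: power_single_unitv prod_single_one xmono_def)
  moreover have "ratfun.xpow a = to_fract (\<Prod>i\<in>UNIV. Poly_Mapping.single (unitv i) 1 ^ Poly_Mapping.lookup a i)"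
    by (simp add: ratfun.xpow_def to_fract_prod to_fract_power)
  ultimately show ?thesis
    by simp
qed

lemma ratfun_xpow_unitv: "ratfun.xpow (unitv i) = var_fract i"
  by (simp add: ratfun_xpow_eq_to_fract xmono_def)

lemma to_fract_single: "to_fract (Poly_Mapping.single a c) = const_fract c * ratfun.xpow a"
proof -
  have "Poly_Mapping.single a c = Poly_Mapping.single 0 c * xmono a"
    by (simp add: xmono_def mult_single)
  then show ?thesis
    by (simp add: to_fract_mult ratfun_xpow_eq_to_fract)
qed

lemma to_fract_cmul: "to_fract (cmul c p) = const_fract c * to_fract p"
  by (simp add: cmul_conv_mult to_fract_mult)

section \<open>The annihilator of \<open>1/q\<^sup>l\<close>\<close>

definition pair_fract :: "'n::finite mpoly \<Rightarrow> 'n mpoly \<times> nat \<Rightarrow> 'n mpoly_idom fract" where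
  "pair_fract q x = to_fract (fst x) * inverse (to_fract q) ^ snd x"

lemma pair_fract_dstep:
  assumes "q \<noteq> 0"
  shows "pair_fract q (dstep q i x) = fract_pderiv i (pair_fract q x)"
proof -
  obtain h m where x: "x = (h, m)"
    by (cases x)
  let ?Q = "to_fract q"
  have Q: "?Q \<noteq> 0"
    using assms by simp
  have "fract_pderiv i (pair_fract q x) = to_fract (pderiv_mp i h) * inverse ?Q ^ m +
      to_fract h * (of_nat m * inverse ?Q ^ (m - 1) * (- to_fract (pderiv_mp i q) * inverse ?Q ^ 2))"
    by (simp add: pair_fract_def x fract_pderiv_mult fract_pderiv_to_fract ratfun.D_power fract_pderiv_inverse[OF Q])
  also have "\<dots> = pair_fract q (dstep q i x)"
    using Q unfolding pair_fract_def x dstep_def fst_conv snd_conv to_fract_diff to_fract_mult to_fract_of_nat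
    by (cases m) (simp_all add: field_simps power2_eq_square)
  finally show ?thesis
    by simp
qed

lemma pair_fract_dpow_inv:
  assumes "q \<noteq> 0"
  shows "pair_fract q (dpow_inv q l b) = ratfun.Dpow b (inverse (to_fract q) ^ l)"
proof -
  have "pair_fract q ((dstep q i ^^ n) x) = (fract_pderiv i ^^ n) (pair_fract q x)" for i n x
    by (induction n) (simp_all add: pair_fract_dstep[OF assms])
  then have "pair_fract q (foldr (\<lambda>i. dstep q i ^^ g i) xs x) = foldr (\<lambda>i. fract_pderiv i ^^ g i) xs (pair_fract q x)"
    for g xs x
    by (induction xs) simp_all
  moreover have "pair_fract q (1, l) = inverse (to_fract q) ^ l"
    by (simp add: pair_fract_def)
  ultimately show ?thesis
    unfolding dpow_inv_def ratfun.Dpow_def by metis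
qed

lemma snd_dpow_inv:
  fixes q :: "'n::finite mpoly"
  shows "snd (dpow_inv q l b) = l + tdeg b"
proof -
  have "snd ((dstep q i ^^ n) x) = snd x + n" for i n x
    by (induction n) (simp_all add: dstep_def)
  then have "snd (foldr (\<lambda>i. dstep q i ^^ g i) xs x) = snd x + sum_list (map g xs)" for g xs x
    by (induction xs) simp_all
  moreover have "tdeg b = sum_list (map (Poly_Mapping.lookup b) var_list)"
    using distinct_var_list_UNIV[where 'n='n] sum.distinct_set_conv_list[of var_list "Poly_Mapping.lookup b"]
    by (simp add: tdeg_def)
  ultimately show ?thesis
    by (simp add: dpow_inv_def)
qed

text \<open>The annihilation condition with the common denominator \<open>q\<^sup>N\<close> for an arbitrary
  admissible \<open>N\<close>; \<open>annihilates\<close> uses one particular choice of \<open>N\<close>.\<close>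

definition cleared_sum :: "'n::finite mpoly \<Rightarrow> nat \<Rightarrow> nat \<Rightarrow> 'n weyl \<Rightarrow> 'n mpoly" where
  "cleared_sum q l N P = (\<Sum>(a, b)\<in>Poly_Mapping.keys P. cmul (Poly_Mapping.lookup P (a, b))
      (xmono a * fst (dpow_inv q l b) * q ^ (N - snd (dpow_inv q l b))))"

lemma to_fract_cleared_sum:
  assumes "q \<noteq> 0" and N: "\<And>a b. (a, b) \<in> Poly_Mapping.keys P \<Longrightarrow> l + tdeg b \<le> N"
  shows "to_fract (cleared_sum q l N P) = to_fract q ^ N * ratfun.act P (inverse (to_fract q) ^ l)"
proof -
  let ?Q = "to_fract q"
  have "to_fract (cleared_sum q l N P) = (\<Sum>k\<in>Poly_Mapping.keys P. const_fract (Poly_Mapping.lookup P k) *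
      (ratfun.xpow (fst k) * to_fract (fst (dpow_inv q l (snd k))) * ?Q ^ (N - snd (dpow_inv q l (snd k)))))"
    by (simp add: cleared_sum_def to_fract_sum split_def to_fract_cmul to_fract_mult to_fract_power ratfun_xpow_eq_to_fract)
  also have "\<dots> = (\<Sum>k\<in>Poly_Mapping.keys P. ?Q ^ N * (const_fract (Poly_Mapping.lookup P k) *
      ratfun.mono_act k (inverse ?Q ^ l)))"
  proof (rule sum.cong[OF refl])
    fix k assume k: "k \<in> Poly_Mapping.keys P"
    obtain a b where ab: "k = (a, b)"
      by (cases k)
    have "snd (dpow_inv q l b) \<le> N"
      using N[of a b] k ab by (simp add: snd_dpow_inv)
    then have "?Q ^ (N - snd (dpow_inv q l b)) = ?Q ^ N * inverse ?Q ^ snd (dpow_inv q l b)"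
      using assms(1) by (simp add: power_diff divide_inverse power_inverse)
    then show "const_fract (Poly_Mapping.lookup P k) * (ratfun.xpow (fst k) * to_fract (fst (dpow_inv q l (snd k))) *
        ?Q ^ (N - snd (dpow_inv q l (snd k)))) = ?Q ^ N * (const_fract (Poly_Mapping.lookup P k) * ratfun.mono_act k (inverse ?Q ^ l))"
      using pair_fract_dpow_inv[OF assms(1), of l b] by (simp add: ab ratfun.mono_act_def pair_fract_def ac_simps)
  qed
  also have "\<dots> = ?Q ^ N * ratfun.act P (inverse ?Q ^ l)"
    by (simp add: ratfun.act_def sum_distrib_left)
  finally show ?thesis .
qed

lemma Ann_inv_pow_iff_act:
  assumes "q \<noteq> 0"
  shows "P \<in> Ann_inv_pow q l \<longleftrightarrow> ratfun.act P (inverse (to_fract q) ^ l) = 0"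
proof -
  let ?N = "\<Sum>(a, b)\<in>Poly_Mapping.keys P. snd (dpow_inv q l b)"
  have "snd (dpow_inv q l b) \<le> ?N" if "(a, b) \<in> Poly_Mapping.keys P" for a b
    using that member_le_sum[of "(a, b)" "Poly_Mapping.keys P" "\<lambda>(a, b). snd (dpow_inv q l b)"] by simp
  then have "to_fract (cleared_sum q l ?N P) = to_fract q ^ ?N * ratfun.act P (inverse (to_fract q) ^ l)"
    using assms by (intro to_fract_cleared_sum) (auto simp: snd_dpow_inv)
  moreover have "P \<in> Ann_inv_pow q l \<longleftrightarrow> cleared_sum q l ?N P = 0"
    by (simp add: Ann_inv_pow_def annihilates_def cleared_sum_def)
  moreover have "to_fract q ^ ?N \<noteq> 0"
    using assms by simp
  ultimately show ?thesis
    using assms by (simp flip: to_fract_eq_0_iff[of "cleared_sum q l ?N P"])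
qed

lemma Ann_inv_pow_iff_cleared_sum:
  assumes "q \<noteq> 0" "\<And>a b. (a, b) \<in> Poly_Mapping.keys P \<Longrightarrow> l + tdeg b \<le> N"
  shows "P \<in> Ann_inv_pow q l \<longleftrightarrow> cleared_sum q l N P = 0"
proof -
  have "to_fract q ^ N \<noteq> 0"
    using assms(1) by simp
  then show ?thesis
    using assms(1) to_fract_cleared_sum[of q P l N, OF assms] Ann_inv_pow_iff_act[OF assms(1), of P l]
    by (simp flip: to_fract_eq_0_iff[of "cleared_sum q l N P"])
qed

lemma Ann_inv_pow_eq_Ann_inv_power:
  assumes "f \<noteq> 0"
  shows "Ann_inv_pow f l = Ann_inv_pow (f ^ l) 1"
  using assms mpoly_power_neq_0[OF assms, of l]
  by (auto simp: Ann_inv_pow_iff_act to_fract_power power_inverse)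

lemma left_ideal_gen_subset_Ann_inv_pow:
  assumes "q \<noteq> 0" "S \<subseteq> Ann_inv_pow q l"
  shows "left_ideal_gen S \<subseteq> Ann_inv_pow q l"
proof
  fix P assume "P \<in> left_ideal_gen S"
  then have "ratfun.act P (inverse (to_fract q) ^ l) = 0"
    by (rule ratfun.act_left_ideal_gen[rotated]) (use assms in \<open>auto simp: Ann_inv_pow_iff_act\<close>)
  then show "P \<in> Ann_inv_pow q l"
    using assms by (simp add: Ann_inv_pow_iff_act)
qed

section \<open>Initial forms of annihilating operators\<close>

lemma lookup_init_form:
  "Poly_Mapping.lookup (init_form w P) k =
    (if wt w k = Max (wt w ` Poly_Mapping.keys P) then Poly_Mapping.lookup P k else 0)"
  by (simp add: init_form_def Let_def lookup_sum lookup_single when_def in_keys_iff split: if_splits)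

lemma keys_init_form:
  "Poly_Mapping.keys (init_form w P) = {k \<in> Poly_Mapping.keys P. wt w k = Max (wt w ` Poly_Mapping.keys P)}"
  by (auto simp: in_keys_iff lookup_init_form split: if_splits)

lemma init_form_neq_0:
  assumes "P \<noteq> 0"
  shows "init_form w P \<noteq> 0"
proof -
  have "Max (wt w ` Poly_Mapping.keys P) \<in> wt w ` Poly_Mapping.keys P"
    by (rule Max_in) (use assms in auto)
  then obtain k where "k \<in> Poly_Mapping.keys P" "wt w k = Max (wt w ` Poly_Mapping.keys P)"
    by auto
  then have "k \<in> Poly_Mapping.keys (init_form w P)"
    by (simp add: keys_init_form)
  then show ?thesis
    by auto
qed

lemma init_form_init_form:
  assumes "P \<noteq> 0"
  shows "init_form w (init_form w P) = init_form w P"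
proof -
  let ?M = "Max (wt w ` Poly_Mapping.keys P)"
  have "Poly_Mapping.keys (init_form w P) \<noteq> {}"
    using init_form_neq_0[OF assms] by simp
  then have "wt w ` Poly_Mapping.keys (init_form w P) = {?M}"
    by (auto simp: keys_init_form)
  then have M: "Max (wt w ` Poly_Mapping.keys (init_form w P)) = ?M"
    by simp
  show ?thesis
  proof (rule poly_mapping_eqI)
    fix k
    show "Poly_Mapping.lookup (init_form w (init_form w P)) k = Poly_Mapping.lookup (init_form w P) k"
      unfolding lookup_init_form[of w "init_form w P"] M by (simp add: lookup_init_form)
  qed
qed

text \<open>\<open>init_pair_rel w d e x y\<close> for \<open>x = (h, m)\<close>, standing for \<open>h/f\<^sup>m\<close> with \<open>d = ord_f f w\<close>:
  all monomials of \<open>h\<close> have \<open>w\<close>-weight at least \<open>m d - e\<close>, and \<open>y = (h', m)\<close> with \<open>h'\<close> the part of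
  \<open>h\<close> of exactly that weight. So \<open>h'/in\<^sub>w(f)\<^sup>m\<close> is the initial part of \<open>h/f\<^sup>m\<close>, of weight \<open>-e\<close>.\<close>

definition init_pair_rel :: "real^'n \<Rightarrow> real \<Rightarrow> real \<Rightarrow> 'n::finite mpoly \<times> nat \<Rightarrow> 'n mpoly \<times> nat \<Rightarrow> bool" where
  "init_pair_rel w d e x y \<longleftrightarrow> snd y = snd x \<and> weight_ge w (real (snd x) * d - e) (fst x) \<and>
     hom_part w (real (snd x) * d - e) (fst x) = fst y"

lemma init_pair_rel_dstep:
  assumes f: "weight_ge w d f" and r: "init_pair_rel w d e x y"
  shows "init_pair_rel w d (e + w $ i) (dstep f i x) (dstep (hom_part w d f) i y)"
proof -
  obtain h m where x: "x = (h, m)"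
    by (cases x)
  then obtain h' where y: "y = (h', m)"
    using r by (cases y) (auto simp: init_pair_rel_def)
  let ?d = "real m * d - e"
  have h: "weight_ge w ?d h" "hom_part w ?d h = h'"
    using r x y by (auto simp: init_pair_rel_def)
  have dh: "weight_ge w (?d - w $ i) (pderiv_mp i h)" "hom_part w (?d - w $ i) (pderiv_mp i h) = pderiv_mp i h'"
    using weight_ge_pderiv_mp[OF h(1)] hom_part_pderiv_mp[of w ?d i h] h(2) by auto
  have df: "weight_ge w (d - w $ i) (pderiv_mp i f)"
    "hom_part w (d - w $ i) (pderiv_mp i f) = pderiv_mp i (hom_part w d f)"
    using weight_ge_pderiv_mp[OF f] hom_part_pderiv_mp by auto
  have mh: "weight_ge w (0 + ?d) (of_nat m * h)" "hom_part w (0 + ?d) (of_nat m * h) = of_nat m * h'"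
    using weight_ge_mult[OF weight_ge_of_nat h(1)] hom_part_mult[OF weight_ge_of_nat h(1)] h(2)
    by (auto simp: hom_part_of_nat)
  let ?D = "real (Suc m) * d - (e + w $ i)"
  have e1: "(?d - w $ i) + d = ?D" and e2: "(0 + ?d) + (d - w $ i) = ?D"
    by (simp_all add: algebra_simps)
  have A: "weight_ge w ?D (pderiv_mp i h * f)" "hom_part w ?D (pderiv_mp i h * f) = pderiv_mp i h' * hom_part w d f"
    using weight_ge_mult[OF dh(1) f] hom_part_mult[OF dh(1) f] dh(2) unfolding e1 by auto
  have B: "weight_ge w ?D (of_nat m * h * pderiv_mp i f)"
    "hom_part w ?D (of_nat m * h * pderiv_mp i f) = of_nat m * h' * pderiv_mp i (hom_part w d f)"
    using weight_ge_mult[OF mh(1) df(1)] hom_part_mult[OF mh(1) df(1)] mh(2) df(2) unfolding e2 by auto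
  show ?thesis
    unfolding x y init_pair_rel_def dstep_def fst_conv snd_conv using A B
    by (simp add: weight_ge_diff hom_part_diff)
qed

lemma init_pair_rel_funpow:
  assumes f: "weight_ge w d f"
  shows "init_pair_rel w d e x y \<Longrightarrow>
    init_pair_rel w d (e + real n * w $ i) ((dstep f i ^^ n) x) ((dstep (hom_part w d f) i ^^ n) y)"
proof (induction n)
  case (Suc n)
  have "init_pair_rel w d (e + real n * w $ i + w $ i)
      (dstep f i ((dstep f i ^^ n) x)) (dstep (hom_part w d f) i ((dstep (hom_part w d f) i ^^ n) y))"
    by (rule init_pair_rel_dstep[OF f Suc.IH[OF Suc.prems]])
  then show ?case
    by (simp add: algebra_simps)
qed simp

lemma init_pair_rel_foldr:
  assumes f: "weight_ge w d f"
  shows "init_pair_rel w d e x y \<Longrightarrow>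
    init_pair_rel w d (e + (\<Sum>i\<leftarrow>xs. real (Poly_Mapping.lookup b i) * w $ i))
      (foldr (\<lambda>i. dstep f i ^^ Poly_Mapping.lookup b i) xs x)
      (foldr (\<lambda>i. dstep (hom_part w d f) i ^^ Poly_Mapping.lookup b i) xs y)"
proof (induction xs)
  case (Cons i xs)
  show ?case
    using init_pair_rel_funpow[OF f Cons.IH[OF Cons.prems], of "Poly_Mapping.lookup b i" i]
    by (simp add: algebra_simps)
qed simp

lemma init_pair_rel_dpow_inv:
  fixes f :: "'n::finite mpoly"
  assumes f: "weight_ge w d f"
  shows "init_pair_rel w d (real l * d + mweight w b) (dpow_inv f l b) (dpow_inv (hom_part w d f) l b)"
proof -
  have base: "init_pair_rel w d (real l * d) (1, l) (1, l)"
    using hom_part_of_nat[of w 1] by (simp add: init_pair_rel_def weight_ge_def)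
  have "(\<Sum>i\<leftarrow>var_list. real (Poly_Mapping.lookup b i) * w $ i) = mweight w b"
    using distinct_var_list_UNIV[where 'n='n] by (simp add: mweight_conv_sum sum.distinct_set_conv_list[symmetric])
  then show ?thesis
    using init_pair_rel_foldr[OF f base, where xs = var_list and b = b]
    unfolding dpow_inv_def by simp
qed

lemma face_part_tau_neq_0: "f \<noteq> 0 \<Longrightarrow> face_part f (tau f w) \<noteq> 0"
  by (simp add: face_part_tau_eq_hom_part hom_part_ord_f_neq_0)

lemma hom_part_cleared_term:
  fixes f :: "'n::finite mpoly" and w :: "real^'n"
  assumes "l + tdeg b \<le> N"
  defines "d \<equiv> ord_f f w" and "g \<equiv> face_part f (tau f w)"
  shows "weight_ge w (real N * d - real l * d - wt w (a, b))
      (xmono a * fst (dpow_inv f l b) * f ^ (N - snd (dpow_inv f l b)))"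
    and "hom_part w (real N * d - real l * d - wt w (a, b))
      (xmono a * fst (dpow_inv f l b) * f ^ (N - snd (dpow_inv f l b))) =
      xmono a * fst (dpow_inv g l b) * g ^ (N - snd (dpow_inv g l b))"
proof -
  let ?m = "l + tdeg b"
  let ?e = "real ?m * d - (real l * d + mweight w b)"
  have f: "weight_ge w d f" and g: "g = hom_part w d f"
    by (simp_all add: d_def g_def weight_ge_ord_f face_part_tau_eq_hom_part)
  have h: "weight_ge w ?e (fst (dpow_inv f l b))" "hom_part w ?e (fst (dpow_inv f l b)) = fst (dpow_inv g l b)"
    using init_pair_rel_dpow_inv[OF f, of l b] by (simp_all add: init_pair_rel_def snd_dpow_inv g)
  have xh: "weight_ge w (mweight w a + ?e) (xmono a * fst (dpow_inv f l b))"
    "hom_part w (mweight w a + ?e) (xmono a * fst (dpow_inv f l b)) = xmono a * fst (dpow_inv g l b)"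
    unfolding hom_part_mult[OF weight_ge_xmono h(1)] hom_part_xmono h(2)
    by (rule weight_ge_mult[OF weight_ge_xmono h(1)]) (rule refl)
  have fN: "weight_ge w (real (N - ?m) * d) (f ^ (N - ?m))" "hom_part w (real (N - ?m) * d) (f ^ (N - ?m)) = g ^ (N - ?m)"
    using weight_ge_power[OF f] hom_part_power[OF f] g by simp_all
  have E: "mweight w a + ?e + real (N - ?m) * d = real N * d - real l * d - wt w (a, b)"
    using assms(1) by (simp add: wt_conv_mweight of_nat_diff algebra_simps)
  have m: "snd (dpow_inv f l b) = ?m" "snd (dpow_inv g l b) = ?m"
    by (simp_all add: snd_dpow_inv)
  show "weight_ge w (real N * d - real l * d - wt w (a, b))
      (xmono a * fst (dpow_inv f l b) * f ^ (N - snd (dpow_inv f l b)))"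
    unfolding E[symmetric] m by (rule weight_ge_mult[OF xh(1) fN(1)])
  show "hom_part w (real N * d - real l * d - wt w (a, b))
      (xmono a * fst (dpow_inv f l b) * f ^ (N - snd (dpow_inv f l b))) =
      xmono a * fst (dpow_inv g l b) * g ^ (N - snd (dpow_inv g l b))"
    unfolding E[symmetric] m hom_part_mult[OF xh(1) fN(1)] xh(2) fN(2) ..
qed

text \<open>The weight is the lowest \<open>w\<close>-order of the cleared sum; the terms of \<open>P\<close> outside
  \<open>init_form w P\<close> only contribute in higher order.\<close>

lemma hom_part_cleared_sum:
  fixes f :: "'n::finite mpoly"
  assumes N: "\<And>a b. (a, b) \<in> Poly_Mapping.keys P \<Longrightarrow> l + tdeg b \<le> N"
  shows "hom_part w (real N * ord_f f w - real l * ord_f f w - Max (wt w ` Poly_Mapping.keys P)) (cleared_sum f l N P) =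
    cleared_sum (face_part f (tau f w)) l N (init_form w P)"
proof -
  let ?g = "face_part f (tau f w)"
  let ?K = "Poly_Mapping.keys P"
  let ?M = "Max (wt w ` ?K)"
  let ?T = "Poly_Mapping.keys (init_form w P)"
  let ?D = "real N * ord_f f w - real l * ord_f f w - ?M"
  let ?t = "\<lambda>q (a, b). xmono a * fst (dpow_inv q l b) * q ^ (N - snd (dpow_inv q l b))"
  have "hom_part w ?D (cmul (Poly_Mapping.lookup P x) (?t f x)) =
      (if x \<in> ?T then cmul (Poly_Mapping.lookup (init_form w P) x) (?t ?g x) else 0)" if x: "x \<in> ?K" for x
  proof -
    obtain a b where ab: "x = (a, b)"
      by (cases x)
    note contrib = hom_part_cleared_term[OF N[OF x[unfolded ab]], where f = f and w = w and a = a]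
    show ?thesis
    proof (cases "wt w x = ?M")
      case True
      then show ?thesis
        using x contrib by (simp add: ab hom_part_cmul keys_init_form lookup_init_form)
    next
      case False
      then have "wt w x < ?M"
        using x by (simp add: order.not_eq_order_implies_strict)
      then have "hom_part w ?D (?t f x) = 0"
        using contrib(1) by (intro hom_part_eq_0_below) (auto simp: ab)
      then show ?thesis
        using False by (simp add: hom_part_cmul keys_init_form)
    qed
  qed
  then have "hom_part w ?D (cleared_sum f l N P) = (\<Sum>x\<in>?K. if x \<in> ?T
      then cmul (Poly_Mapping.lookup (init_form w P) x) (?t ?g x) else 0)"
    unfolding cleared_sum_def hom_part_sum by (intro sum.cong refl) (simp add: split_def)
  also have "\<dots> = cleared_sum ?g l N (init_form w P)"
  proof -
    have "?T \<subseteq> ?K"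
      by (auto simp: keys_init_form)
    then show ?thesis
      by (simp add: cleared_sum_def sum.inter_restrict[symmetric] Int_absorb1 split_def)
  qed
  finally show ?thesis .
qed

lemma init_form_mem_Ann_inv_pow_face_part:
  fixes f :: "'n::finite mpoly"
  assumes f: "f \<noteq> 0" and P: "P \<in> Ann_inv_pow f l" "P \<noteq> 0"
  shows "init_form w P \<in> Ann_inv_pow (face_part f (tau f w)) l"
proof -
  define N where "N = (\<Sum>(a, b)\<in>Poly_Mapping.keys P. l + tdeg b)"
  have N: "l + tdeg b \<le> N" if "(a, b) \<in> Poly_Mapping.keys P" for a b
    using that member_le_sum[of "(a, b)" "Poly_Mapping.keys P" "\<lambda>(a, b). l + tdeg b"] by (simp add: N_def)
  then have "cleared_sum f l N P = 0"
    using Ann_inv_pow_iff_cleared_sum[OF f, of P l N] P by simp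
  then have "cleared_sum (face_part f (tau f w)) l N (init_form w P) = 0"
    using hom_part_cleared_sum[where P = P and l = l and N = N and f = f and w = w] N by simp
  moreover have "l + tdeg b \<le> N" if "(a, b) \<in> Poly_Mapping.keys (init_form w P)" for a b
    using that N by (auto simp: keys_init_form)
  ultimately show ?thesis
    using Ann_inv_pow_iff_cleared_sum[OF face_part_tau_neq_0[OF f], of "init_form w P" l N] by blast
qed

lemma init_ideal_subset_init_ideal_face_part:
  fixes f :: "'n::finite mpoly"
  assumes "f \<noteq> 0"
  shows "init_ideal w (Ann_inv_pow f l) \<subseteq> init_ideal w (Ann_inv_pow (face_part f (tau f w)) l)"
  unfolding init_ideal_def
proof (rule left_ideal_gen_mono, safe)
  fix P assume "P \<in> Ann_inv_pow f l" "P \<noteq> 0"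
  then show "\<exists>Q. init_form w P = init_form w Q \<and> Q \<in> Ann_inv_pow (face_part f (tau f w)) l \<and> Q \<noteq> 0"
    using init_form_init_form init_form_mem_Ann_inv_pow_face_part[OF assms] init_form_neq_0 by metis
qed

lemma init_ideal_subset_Ann_inv_pow_face_part:
  fixes f :: "'n::finite mpoly"
  assumes "f \<noteq> 0"
  shows "init_ideal w (Ann_inv_pow f l) \<subseteq> Ann_inv_pow (face_part f (tau f w)) l"
  unfolding init_ideal_def
  using init_form_mem_Ann_inv_pow_face_part[OF assms]
  by (intro left_ideal_gen_subset_Ann_inv_pow face_part_tau_neq_0 assms) blast

theorem bfun_face_part_dvd_bfun:
  fixes f :: "'n::finite mpoly"
  assumes "f \<noteq> 0"
  shows "bfun (Ann_inv_pow (face_part f (tau f w)) l) w dvd bfun (Ann_inv_pow f l) w"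
proof -
  have "bfun (Ann_inv_pow f l) w \<in> bfun_ideal (Ann_inv_pow f l) w"
    by (simp add: bfun_ideal_eq)
  then have "bfun (Ann_inv_pow f l) w \<in> bfun_ideal (Ann_inv_pow (face_part f (tau f w)) l) w"
    using init_ideal_subset_init_ideal_face_part[OF assms] by (auto simp: bfun_ideal_def)
  then show ?thesis
    by (simp add: bfun_ideal_eq)
qed

section \<open>The Euler operator of a polynomial\<close>

definition weighted_euler :: "real^'n \<Rightarrow> 'n::finite mpoly \<Rightarrow> 'n mpoly" where
  "weighted_euler w p = (\<Sum>a\<in>Poly_Mapping.keys p.
     Poly_Mapping.single a (Poly_Mapping.lookup p a * complex_of_real (mweight w a)))"

lemma lookup_weighted_euler:
  "Poly_Mapping.lookup (weighted_euler w p) a = Poly_Mapping.lookup p a * complex_of_real (mweight w a)"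
  by (simp add: weighted_euler_def lookup_sum lookup_single when_def in_keys_iff split: if_splits)

lemma weighted_euler_sum: "weighted_euler w (sum g S) = (\<Sum>x\<in>S. weighted_euler w (g x))"
  by (rule poly_mapping_eqI) (simp add: lookup_weighted_euler lookup_sum sum_distrib_right)

lemma weighted_euler_single:
  "weighted_euler w (Poly_Mapping.single a c) = Poly_Mapping.single a (c * complex_of_real (mweight w a))"
  by (rule poly_mapping_eqI) (simp add: lookup_weighted_euler lookup_single when_def)

lemma weighted_euler_eq_sum_pderiv:
  "weighted_euler w p =
    (\<Sum>i\<in>UNIV. Poly_Mapping.single 0 (complex_of_real (w $ i)) * Poly_Mapping.single (unitv i) 1 * pderiv_mp i p)"
    (is "_ = ?L p")
proof -
  have single: "?L (Poly_Mapping.single a c) = weighted_euler w (Poly_Mapping.single a c)" for a c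
  proof -
    have "Poly_Mapping.single 0 (complex_of_real (w $ i)) * Poly_Mapping.single (unitv i) 1 *
        pderiv_mp i (Poly_Mapping.single a c) =
        Poly_Mapping.single a (c * complex_of_real (real (Poly_Mapping.lookup a i) * w $ i))" for i
    proof (cases "Poly_Mapping.lookup a i = 0")
      case False
      then have "unitv i + (a - unitv i) = a"
        by (metis add.commute minus_unitv_add_unitv)
      then show ?thesis
        by (simp add: pderiv_mp_single mult_single ac_simps)
    qed (simp add: pderiv_mp_single)
    then show ?thesis
      by (simp add: weighted_euler_single mweight_conv_sum single_sum sum_distrib_left of_real_sum)
  qed
  have sum: "?L (sum g S) = (\<Sum>x\<in>S. ?L (g x))" for g S
    unfolding pderiv_mp_sum sum_distrib_left by (rule sum.swap)
  have "?L p = ?L (\<Sum>a\<in>Poly_Mapping.keys p. Poly_Mapping.single a (Poly_Mapping.lookup p a))"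
    by (simp only: poly_mapping_sum_single[symmetric])
  also have "\<dots> = weighted_euler w (\<Sum>a\<in>Poly_Mapping.keys p. Poly_Mapping.single a (Poly_Mapping.lookup p a))"
    by (simp only: sum single weighted_euler_sum)
  also have "\<dots> = weighted_euler w p"
    by (simp only: poly_mapping_sum_single[symmetric])
  finally show ?thesis ..
qed

definition fract_euler :: "real^'n \<Rightarrow> 'n::finite mpoly_idom fract \<Rightarrow> 'n mpoly_idom fract" where
  "fract_euler w u = (\<Sum>i\<in>UNIV. const_fract (complex_of_real (w $ i)) * var_fract i * fract_pderiv i u)"

lemma fract_euler_to_fract: "fract_euler w (to_fract p) = to_fract (weighted_euler w p)"
  by (simp add: fract_euler_def fract_pderiv_to_fract weighted_euler_eq_sum_pderiv to_fract_sum to_fract_mult)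

lemma fract_euler_inverse: "u \<noteq> 0 \<Longrightarrow> fract_euler w (inverse u) = - fract_euler w u * inverse u ^ 2"
  by (simp add: fract_euler_def fract_pderiv_inverse sum_distrib_left sum_distrib_right sum_negf ac_simps)

text \<open>\<open>euler_op w h\<close> is the normal ordering of \<open>h \<theta>\<^sub>w + \<theta>\<^sub>w(h)\<close> with \<open>\<theta>\<^sub>w = \<Sum>\<^sub>i w\<^sub>i x\<^sub>i \<partial>\<^sub>i\<close>;
  it annihilates \<open>1/h\<close> because \<open>\<theta>\<^sub>w(1/h) = -\<theta>\<^sub>w(h)/h\<^sup>2\<close>.\<close>

definition euler_term :: "real^'n \<Rightarrow> complex \<Rightarrow> 'n::finite mono \<Rightarrow> 'n weyl" where
  "euler_term w c a =
     (\<Sum>i\<in>UNIV. Poly_Mapping.single (a + unitv i, unitv i) (c * complex_of_real (w $ i))) +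
     Poly_Mapping.single (a, 0) (c * complex_of_real (mweight w a))"

definition euler_op :: "real^'n \<Rightarrow> 'n::finite mpoly \<Rightarrow> 'n weyl" where
  "euler_op w h = (\<Sum>a\<in>Poly_Mapping.keys h. euler_term w (Poly_Mapping.lookup h a) a)"

lemma act_euler_term:
  "ratfun.act (euler_term w c a) u =
    const_fract c * ratfun.xpow a * fract_euler w u + const_fract (c * complex_of_real (mweight w a)) * ratfun.xpow a * u"
  by (simp add: euler_term_def ratfun.act_add ratfun.act_sum ratfun.act_single ratfun.mono_act_def ratfun.xpow_add ratfun.Dpow_unitv
      ratfun_xpow_unitv fract_euler_def ratfun.C_mult sum_distrib_left ac_simps)

lemma to_fract_sum_single:
  "to_fract (\<Sum>a\<in>S. Poly_Mapping.single a (g a)) = (\<Sum>a\<in>S. const_fract (g a) * ratfun.xpow a)"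
  unfolding to_fract_sum by (rule sum.cong[OF refl], rule to_fract_single)

lemma act_euler_op: "ratfun.act (euler_op w h) u = to_fract h * fract_euler w u + to_fract (weighted_euler w h) * u"
proof -
  have E1: "to_fract h = (\<Sum>a\<in>Poly_Mapping.keys h. const_fract (Poly_Mapping.lookup h a) * ratfun.xpow a)"
    by (subst poly_mapping_sum_single[of h]) (rule to_fract_sum_single)
  have E2: "to_fract (weighted_euler w h) = (\<Sum>a\<in>Poly_Mapping.keys h.
      const_fract (Poly_Mapping.lookup h a * complex_of_real (mweight w a)) * ratfun.xpow a)"
    unfolding weighted_euler_def by (rule to_fract_sum_single)
  have "ratfun.act (euler_op w h) u = (\<Sum>a\<in>Poly_Mapping.keys h.
      const_fract (Poly_Mapping.lookup h a) * ratfun.xpow a * fract_euler w u +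
      const_fract (Poly_Mapping.lookup h a * complex_of_real (mweight w a)) * ratfun.xpow a * u)"
    by (simp only: euler_op_def ratfun.act_sum act_euler_term)
  also have "\<dots> = to_fract h * fract_euler w u + to_fract (weighted_euler w h) * u"
    unfolding E1 E2 by (simp only: sum.distrib sum_distrib_right)
  finally show ?thesis .
qed

lemma euler_op_mem_Ann_inv_pow:
  assumes "h \<noteq> 0"
  shows "euler_op w h \<in> Ann_inv_pow h 1"
proof -
  have H: "to_fract h \<noteq> 0"
    using assms by simp
  have fi: "fract_euler w (inverse (to_fract h)) = - to_fract (weighted_euler w h) * inverse (to_fract h) ^ 2"
    unfolding fract_euler_inverse[OF H] fract_euler_to_fract ..
  have "ratfun.act (euler_op w h) (inverse (to_fract h)) = 0"
    unfolding act_euler_op fi using H by (simp add: power2_eq_square field_simps)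
  then show ?thesis
    using assms by (simp add: Ann_inv_pow_iff_act)
qed

lemma euler_op_neq_0:
  fixes h :: "'n::finite mpoly"
  assumes h: "h \<noteq> 0" and w: "w \<noteq> 0"
  shows "euler_op w h \<noteq> 0"
proof
  assume E: "euler_op w h = 0"
  obtain j where j: "w $ j \<noteq> 0"
    using w by (metis vec_eq_iff zero_index)
  have "fract_euler w 1 = 0"
    by (simp add: fract_euler_def)
  moreover have "ratfun.act (euler_op w h) 1 = 0"
    using E by simp
  ultimately have t0: "to_fract (weighted_euler w h) = 0"
    by (simp add: act_euler_op)
  have "fract_euler w (var_fract j) = const_fract (complex_of_real (w $ j)) * var_fract j"
  proof -
    have "fract_euler w (var_fract j) = (\<Sum>i\<in>UNIV. if i = j then const_fract (complex_of_real (w $ i)) * var_fract i else 0)"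
      unfolding fract_euler_def by (rule sum.cong) (auto simp: ratfun.D_X)
    then show ?thesis
      by simp
  qed
  moreover have "ratfun.act (euler_op w h) (var_fract j) = 0"
    using E by simp
  ultimately have "to_fract h * (const_fract (complex_of_real (w $ j)) * var_fract j) = 0"
    by (simp add: act_euler_op t0)
  moreover have "const_fract (complex_of_real (w $ j)) \<noteq> 0"
    using j by (metis lookup_single_eq lookup_zero of_real_eq_0_iff to_fract_eq_0_iff)
  moreover have "var_fract j \<noteq> (0 :: 'n mpoly_idom fract)"
    by (metis lookup_single_eq lookup_zero one_neq_zero to_fract_eq_0_iff)
  ultimately show False
    using h by (metis mult_eq_0_iff to_fract_eq_0_iff)
qed

definition wt_part :: "real^'n \<Rightarrow> real \<Rightarrow> 'n::finite weyl \<Rightarrow> 'n weyl" where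
  "wt_part w M P = (\<Sum>k\<in>{k \<in> Poly_Mapping.keys P. wt w k = M}. Poly_Mapping.single k (Poly_Mapping.lookup P k))"

lemma lookup_wt_part: "Poly_Mapping.lookup (wt_part w M P) k = (if wt w k = M then Poly_Mapping.lookup P k else 0)"
  by (simp add: wt_part_def lookup_sum lookup_single when_def in_keys_iff split: if_splits)

lemma wt_part_add: "wt_part w M (P + Q) = wt_part w M P + wt_part w M Q"
  by (rule poly_mapping_eqI) (simp add: lookup_wt_part lookup_add)

lemma wt_part_sum: "wt_part w M (sum g S) = (\<Sum>x\<in>S. wt_part w M (g x))"
  by (rule poly_mapping_eqI) (simp add: lookup_wt_part lookup_sum)

lemma wt_part_single: "wt_part w M (Poly_Mapping.single k c) = (if wt w k = M then Poly_Mapping.single k c else 0)"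
  by (rule poly_mapping_eqI) (simp add: lookup_wt_part lookup_single when_def)

lemma wt_euler_term_keys: "wt w (a + unitv i, unitv i) = - mweight w a" "wt w (a, 0) = - mweight w a"
  by (simp_all add: wt_conv_mweight mweight_add)

lemma wt_part_euler_term: "wt_part w M (euler_term w' c a) = (if - mweight w a = M then euler_term w' c a else 0)"
  by (simp add: euler_term_def wt_part_add wt_part_sum wt_part_single wt_euler_term_keys)

lemma wt_of_mem_keys_euler_op:
  assumes "k \<in> Poly_Mapping.keys (euler_op w' h)"
  shows "\<exists>a\<in>Poly_Mapping.keys h. wt w k = - mweight w a"
proof -
  obtain a where a: "a \<in> Poly_Mapping.keys h" "k \<in> Poly_Mapping.keys (euler_term w' (Poly_Mapping.lookup h a) a)"
    using assms keys_sum[of "\<lambda>a. euler_term w' (Poly_Mapping.lookup h a) a" "Poly_Mapping.keys h"]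
    by (auto simp: euler_op_def)
  have "Poly_Mapping.keys (euler_term w' c a) \<subseteq> {(a + unitv i, unitv i) | i. True} \<union> {(a, 0)}" for c
  proof -
    let ?A = "\<Sum>i\<in>UNIV. Poly_Mapping.single (a + unitv i, unitv i) (c * complex_of_real (w' $ i))"
    let ?B = "Poly_Mapping.single (a, 0) (c * complex_of_real (mweight w' a))"
    have "Poly_Mapping.keys ?A \<subseteq> (\<Union>i. Poly_Mapping.keys (Poly_Mapping.single (a + unitv i, unitv i) (c * complex_of_real (w' $ i))))"
      by (rule keys_sum)
    then have "Poly_Mapping.keys ?A \<subseteq> {(a + unitv i, unitv i) | i. True}"
      by auto
    moreover have "Poly_Mapping.keys ?B \<subseteq> {(a, 0)}"
      by auto
    moreover have "Poly_Mapping.keys (?A + ?B) \<subseteq> Poly_Mapping.keys ?A \<union> Poly_Mapping.keys ?B"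
      by (rule keys_add)
    ultimately show ?thesis
      unfolding euler_term_def by blast
  qed
  then have "wt w k = - mweight w a"
    using a(2) wt_euler_term_keys by blast
  then show ?thesis
    using a(1) by blast
qed

text \<open>All terms of \<open>euler_op w g\<close> coming from a monomial \<open>x\<^sup>a\<close> of \<open>g\<close> have \<open>(-w,w)\<close>-weight
  \<open>-\<langle>a, w\<rangle>\<close>, so its initial form collects the monomials of lowest \<open>w\<close>-weight.\<close>

lemma init_form_euler_op:
  fixes g :: "'n::finite mpoly"
  assumes g: "g \<noteq> 0" and w: "w \<noteq> 0"
  shows "init_form w (euler_op w g) = euler_op w (face_part g (tau g w))"
proof -
  let ?d = "ord_f g w"
  have W: "wt_part w (- ?d) (euler_op w g) = euler_op w (hom_part w ?d g)"
  proof -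
    have "wt_part w (- ?d) (euler_op w g) =
        (\<Sum>a\<in>{a \<in> Poly_Mapping.keys g. mweight w a = ?d}. euler_term w (Poly_Mapping.lookup g a) a)"
      by (simp add: euler_op_def wt_part_sum wt_part_euler_term sum.inter_filter)
    also have "\<dots> = euler_op w (hom_part w ?d g)"
    proof -
      have k: "Poly_Mapping.keys (hom_part w ?d g) = {a \<in> Poly_Mapping.keys g. mweight w a = ?d}"
        by (auto simp: in_keys_iff lookup_hom_part split: if_splits)
      show ?thesis
        unfolding euler_op_def k by (intro sum.cong refl) (simp add: lookup_hom_part)
    qed
    finally show ?thesis .
  qed
  have "Max (wt w ` Poly_Mapping.keys (euler_op w g)) = - ?d"
  proof (rule Max_eqI)
    fix y assume "y \<in> wt w ` Poly_Mapping.keys (euler_op w g)"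
    then obtain k where k: "k \<in> Poly_Mapping.keys (euler_op w g)" "y = wt w k"
      by auto
    then obtain a where "a \<in> Poly_Mapping.keys g" "wt w k = - mweight w a"
      using wt_of_mem_keys_euler_op by blast
    then show "y \<le> - ?d"
      using k weight_ge_ord_f[of w g] by (simp add: weight_ge_def)
  next
    have "euler_op w (hom_part w ?d g) \<noteq> 0"
      using euler_op_neq_0[OF hom_part_ord_f_neq_0[OF g] w] .
    then obtain k where "Poly_Mapping.lookup (wt_part w (- ?d) (euler_op w g)) k \<noteq> 0"
      using W by (metis lookup_zero poly_mapping_eqI)
    then show "- ?d \<in> wt w ` Poly_Mapping.keys (euler_op w g)"
      by (force simp: lookup_wt_part in_keys_iff split: if_splits)
  qed simp
  then show ?thesis
    by (simp add: init_form_def wt_part_def[symmetric] W face_part_tau_eq_hom_part)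
qed

lemma euler_op_face_part_mem_init_ideal:
  fixes g :: "'n::finite mpoly"
  assumes "g \<noteq> 0" "w \<noteq> 0"
  shows "euler_op w (face_part g (tau g w)) \<in> init_ideal w (Ann_inv_pow g 1)"
  unfolding init_ideal_def init_form_euler_op[OF assms, symmetric]
  using euler_op_mem_Ann_inv_pow[OF assms(1)] euler_op_neq_0[OF assms]
  by (blast intro: left_ideal_gen.gen)

text \<open>Here \<open>euler_op w h \<bullet> G\<^sup>-\<^sup>1 = h (d G - \<theta>\<^sub>w(G)) / G\<^sup>2\<close>.\<close>

lemma weighted_euler_eq_cmul_if_euler_op_mem_Ann:
  fixes G h :: "'n::finite mpoly"
  assumes "G \<noteq> 0" "h \<noteq> 0" and h: "weighted_euler w h = cmul (complex_of_real d) h"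
    and "euler_op w h \<in> Ann_inv_pow G 1"
  shows "weighted_euler w G = cmul (complex_of_real d) G"
proof -
  have EG: "to_fract G \<noteq> 0"
    using assms(1) by simp
  have "ratfun.act (euler_op w h) (inverse (to_fract G)) = 0"
    using assms(1,4) by (simp add: Ann_inv_pow_iff_act)
  then have "to_fract h * (- to_fract (weighted_euler w G) * inverse (to_fract G) ^ 2) +
      const_fract (complex_of_real d) * to_fract h * inverse (to_fract G) = 0"
    unfolding act_euler_op fract_euler_inverse[OF EG] fract_euler_to_fract h to_fract_cmul by simp
  then have "to_fract h * (const_fract (complex_of_real d) * to_fract G - to_fract (weighted_euler w G)) = 0"
    using EG by (simp add: field_simps power2_eq_square)
  then have "to_fract (h * (cmul (complex_of_real d) G - weighted_euler w G)) = 0"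
    by (simp only: to_fract_mult to_fract_diff to_fract_cmul)
  then have "cmul (complex_of_real d) G - weighted_euler w G = 0"
    using mpoly_mult_neq_0[OF assms(2)] by (metis to_fract_eq_0_iff)
  then show ?thesis
    by simp
qed

lemma mweight_eq_ord_f_if_init_ideal_eq:
  fixes g :: "'n::finite mpoly"
  assumes g: "g \<noteq> 0"
    and eq: "init_ideal w (Ann_inv_pow g 1) = init_ideal w' (Ann_inv_pow g 1)"
    and a: "a \<in> Poly_Mapping.keys g" "mweight w a = ord_f g w"
  shows "mweight w' a = ord_f g w'"
proof (cases "w' = 0")
  case True
  then have "mweight w' ` Poly_Mapping.keys g = {0}"
    using a(1) by (auto simp: mweight_def)
  then show ?thesis
    using True g by (simp add: ord_f_eq_Min mweight_def)
next
  case w': False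
  let ?G = "face_part g (tau g w)"
  let ?h = "face_part g (tau g w')"
  have "euler_op w' ?h \<in> init_ideal w (Ann_inv_pow g 1)"
    using euler_op_face_part_mem_init_ideal[OF g w'] unfolding eq .
  then have mem: "euler_op w' ?h \<in> Ann_inv_pow ?G 1"
    using init_ideal_subset_Ann_inv_pow_face_part[OF g] by blast
  have hom: "weighted_euler w' ?h = cmul (complex_of_real (ord_f g w')) ?h"
    by (rule poly_mapping_eqI) (simp add: lookup_weighted_euler face_part_tau_eq_hom_part lookup_hom_part)
  have "weighted_euler w' ?G = cmul (complex_of_real (ord_f g w')) ?G"
    by (rule weighted_euler_eq_cmul_if_euler_op_mem_Ann[OF face_part_tau_neq_0[OF g] face_part_tau_neq_0[OF g] hom mem])
  then have "Poly_Mapping.lookup (weighted_euler w' ?G) a = Poly_Mapping.lookup (cmul (complex_of_real (ord_f g w')) ?G) a"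
    by simp
  moreover have "Poly_Mapping.lookup ?G a = Poly_Mapping.lookup g a" "Poly_Mapping.lookup g a \<noteq> 0"
    using a by (simp_all add: face_part_tau_eq_hom_part lookup_hom_part in_keys_iff)
  ultimately show ?thesis
    by (simp add: lookup_weighted_euler)
qed

lemma tau_eq_if_init_ideal_eq:
  fixes g :: "'n::finite mpoly"
  assumes g: "g \<noteq> 0" and eq: "init_ideal w (Ann_inv_pow g 1) = init_ideal w' (Ann_inv_pow g 1)"
  shows "tau g w = tau g w'"
proof -
  have "{a \<in> Poly_Mapping.keys g. mweight w a = ord_f g w} = {a \<in> Poly_Mapping.keys g. mweight w' a = ord_f g w'}"
    using mweight_eq_ord_f_if_init_ideal_eq[OF g eq] mweight_eq_ord_f_if_init_ideal_eq[OF g eq[symmetric]]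
    by (intro Collect_cong) auto
  then show ?thesis
    by (simp add: tau_eq_convex_hull[OF g])
qed

section \<open>The small Groebner fan refines the Newton fan\<close>

lemma mem_normal_cone_tau: "w \<in> normal_cone f (tau f w)"
  by (simp add: normal_cone_def tau_def)

lemma normal_cone_tau_mem_newton_fan: "f \<noteq> 0 \<Longrightarrow> normal_cone f (tau f w) \<in> newton_fan f"
  using tau_face_of tau_nonempty unfolding newton_fan_def by blast

lemma subset_normal_cone_if_tau_eq_on_rel_interior:
  assumes "f \<noteq> 0" "convex C" "T \<subseteq> newton f" and tau: "\<And>w. w \<in> rel_interior C \<Longrightarrow> tau f w = T"
  shows "C \<subseteq> normal_cone f T"
proof -
  have "rel_interior C \<subseteq> normal_cone f T"
    using tau mem_normal_cone_tau by blast
  then have "closure (rel_interior C) \<subseteq> normal_cone f T"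
    using closed_normal_cone[OF assms(1,3)] by (rule closure_minimal)
  then show ?thesis
    using closure_subset[of C] convex_closure_rel_interior[OF assms(2)] by simp
qed

lemma Union_newton_fan: "f \<noteq> 0 \<Longrightarrow> \<Union>(newton_fan f) = UNIV"
  using mem_normal_cone_tau normal_cone_tau_mem_newton_fan by blast

lemma subset_newton_fan_cone_if_init_ideal_const:
  fixes g :: "'n::finite mpoly"
  assumes g: "g \<noteq> 0" and C: "convex C" "C \<noteq> {}"
    and const: "\<And>w w'. w \<in> rel_interior C \<Longrightarrow> w' \<in> rel_interior C \<Longrightarrow>
      init_ideal w (Ann_inv_pow g 1) = init_ideal w' (Ann_inv_pow g 1)"
  shows "\<exists>D\<in>newton_fan g. C \<subseteq> D"
proof -
  obtain w\<^sub>0 where w\<^sub>0: "w\<^sub>0 \<in> rel_interior C"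
    using C rel_interior_eq_empty by blast
  have "C \<subseteq> normal_cone g (tau g w\<^sub>0)"
  proof (rule subset_normal_cone_if_tau_eq_on_rel_interior[OF g C(1)])
    show "tau g w\<^sub>0 \<subseteq> newton g"
      using face_of_imp_subset[OF tau_face_of[OF g]] .
    fix w assume "w \<in> rel_interior C"
    then show "tau g w = tau g w\<^sub>0"
      using const w\<^sub>0 tau_eq_if_init_ideal_eq[OF g] by blast
  qed
  then show ?thesis
    using normal_cone_tau_mem_newton_fan[OF g] by blast
qed

theorem small_groebner_fan_refines_newton_fan:
  fixes f :: "'n::finite mpoly"
  assumes f: "f \<noteq> 0" and F: "is_small_groebner_fan (Ann_inv_pow f l) F"
  shows "refines F (newton_fan (f ^ l))"
proof -
  have g: "f ^ l \<noteq> 0"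
    using mpoly_power_neq_0[OF f] .
  have fan: "is_fan F"
    using F unfolding is_small_groebner_fan_def by (elim conjE)
  have cover: "\<Union>F = UNIV"
    using F unfolding is_small_groebner_fan_def by (elim conjE)
  have const: "\<forall>C\<in>F. \<forall>w\<in>rel_interior C. \<forall>w'\<in>rel_interior C.
      init_ideal w (Ann_inv_pow (f ^ l) 1) = init_ideal w' (Ann_inv_pow (f ^ l) 1)"
    using F unfolding is_small_groebner_fan_def Ann_inv_pow_eq_Ann_inv_power[OF f] by (elim conjE)
  have nonempty: "{} \<notin> F"
    using fan unfolding is_fan_def by (elim conjE)
  have polyhedra: "\<forall>C\<in>F. polyhedron C"
    using fan unfolding is_fan_def by (elim conjE) blast
  have "\<exists>D\<in>newton_fan (f ^ l). C \<subseteq> D" if "C \<in> F" for C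
    using that polyhedra nonempty const polyhedron_imp_convex
    by (intro subset_newton_fan_cone_if_init_ideal_const[OF g]) blast+
  then show ?thesis
    using cover Union_newton_fan[OF g] by (simp add: refines_def)
qed

theorem mainTheorem7:
  fixes f :: "('n::finite) mpoly" and l :: nat
  assumes "f \<noteq> 0"
  shows "(\<forall>F. is_small_groebner_fan (Ann_inv_pow f l) F \<longrightarrow> refines F (newton_fan (f ^ l)))
       \<and> (\<forall>w::real^'n. w \<noteq> 0 \<longrightarrow>
            bfun (Ann_inv_pow (face_part f (tau f w)) l) w dvd bfun (Ann_inv_pow f l) w)"
  using small_groebner_fan_refines_newton_fan[OF assms] bfun_face_part_dvd_bfun[OF assms] by blast

end
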